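(* Let $\Omega\subset\mathbb{R}^2$ be a bounded domain and let $u,v\in C^{2}(\Omega)\cap C^{0}(\bar\Omega)$. For $w\in\{u,v\}$ let $S(w)=\{(x,y)\in\Omega: w_x-y=0,\ w_y+x=0\}$ and on $\Omega\setminus S(w)$ let $N(w)=(w_x-y,\,w_y+x)/\sqrt{(w_x-y)^2+(w_y+x)^2}$. Let $S=S(u)\cup S(v)$. Suppose $\operatorname{div}N(u)\ge\operatorname{div}N(v)$ in $\Omega\setminus S$, $u\le v$ on $\partial\Omega$, and $\mathcal{H}_1(\bar S)=0$, where $\mathcal{H}_1$ is the 1-dimensional Hausdorff measure. Then $u\le v$ in $\Omega$.
   Context: $\operatorname{div}$ denotes the Euclidean divergence in the $xy$-plane. *)

theory Defs
  imports "HOL-Analysis.Analysis"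
begin

definition px :: "(real \<times> real \<Rightarrow> real) \<Rightarrow> real \<times> real \<Rightarrow> real" where
  "px w p = deriv (\<lambda>t. w (t, snd p)) (fst p)"

definition py :: "(real \<times> real \<Rightarrow> real) \<Rightarrow> real \<times> real \<Rightarrow> real" where
  "py w p = deriv (\<lambda>t. w (fst p, t)) (snd p)"

definition C1_on :: "(real \<times> real) set \<Rightarrow> (real \<times> real \<Rightarrow> real) \<Rightarrow> bool" where
  "C1_on \<Omega> w \<longleftrightarrow>
     (\<forall>p\<in>\<Omega>. (\<lambda>t. w (t, snd p)) differentiable (at (fst p))
            \<and> (\<lambda>t. w (fst p, t)) differentiable (at (snd p)))
     \<and> continuous_on \<Omega> w \<and> continuous_on \<Omega> (px w) \<and> continuous_on \<Omega> (py w)"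

definition C2_on :: "(real \<times> real) set \<Rightarrow> (real \<times> real \<Rightarrow> real) \<Rightarrow> bool" where
  "C2_on \<Omega> w \<longleftrightarrow> C1_on \<Omega> w \<and> C1_on \<Omega> (px w) \<and> C1_on \<Omega> (py w)"

definition div2 :: "(real \<times> real \<Rightarrow> real \<times> real) \<Rightarrow> real \<times> real \<Rightarrow> real" where
  "div2 F p = px (\<lambda>q. fst (F q)) p + py (\<lambda>q. snd (F q)) p"

definition Sing :: "(real \<times> real) set \<Rightarrow> (real \<times> real \<Rightarrow> real) \<Rightarrow> (real \<times> real) set" where
  "Sing \<Omega> w = {p \<in> \<Omega>. px w p - snd p = 0 \<and> py w p + fst p = 0}"

definition Nfield :: "(real \<times> real \<Rightarrow> real) \<Rightarrow> real \<times> real \<Rightarrow> real \<times> real" where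
  "Nfield w p = (let a = px w p - snd p; b = py w p + fst p; r = sqrt (a\<^sup>2 + b\<^sup>2)
                 in (a / r, b / r))"

text \<open>One-dimensional Hausdorff measure (normalised so that it equals the sum of diameters):
  H^1(A) = sup_{\<delta>>0} inf { \<Sum> diam C_i : A \<subseteq> \<Union> C_i, diam C_i \<le> \<delta> }.\<close>
definition hausdorff_pre1 :: "real \<Rightarrow> (real \<times> real) set \<Rightarrow> ennreal" where
  "hausdorff_pre1 \<delta> A =
     (INF C \<in> {C :: nat \<Rightarrow> (real \<times> real) set.
                 A \<subseteq> (\<Union>i. C i) \<and> (\<forall>i. bounded (C i) \<and> diameter (C i) \<le> \<delta>)}.
        (\<Sum>i. ennreal (diameter (C i))))"

definition hausdorff1 :: "(real \<times> real) set \<Rightarrow> ennreal" where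
  "hausdorff1 A = (SUP \<delta> \<in> {0<..}. hausdorff_pre1 \<delta> A)"

end

theory Submission
  imports Defs
begin

text \<open>Suppose \<open>u - v > 2 \<epsilon>\<close> somewhere and put \<open>excess = ((u - v - \<epsilon>)\<^sub>+)\<^sup>2\<close>, a \<open>C\<^sup>1\<close> function
  supported in the compact set \<open>{u - v \<ge> \<epsilon>} \<subseteq> \<Omega>\<close>, so integrations by parts against it
  have no boundary terms.

  First, \<open>N(u) = N(v)\<close> wherever \<open>u - v > \<epsilon>\<close> off \<open>S\<close>. Test \<open>div N(u) - div N(v) \<ge> 0\<close> against
  \<open>\<psi> \<cdot> excess\<close>, where the cutoff \<open>\<psi>\<close> vanishes near \<open>S\<close>, equals 1 on a given box away from \<open>S\<close>,
  and has \<open>\<integral>|\<nabla>\<psi>|\<close> as small as we like (possible because \<open>H\<^sub>1(closure S) = 0\<close>). Since \<open>|N| \<le> 1\<close>,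
  integration by parts bounds \<open>\<integral>\<psi> \<nabla>excess \<cdot> (N(u) - N(v))\<close> by \<open>2 sup excess \<integral>|\<nabla>\<psi>|\<close>;
  as \<open>(a - b) \<cdot> (a/|a| - b/|b|) \<ge> 0\<close> with equality only if \<open>a/|a| = b/|b|\<close>, the integrand
  \<open>\<nabla>excess \<cdot> (N(u) - N(v))\<close> is nonnegative and hence zero.

  Second, \<open>(u\<^sub>x - y, u\<^sub>y + x)\<close> and \<open>(v\<^sub>x - y, v\<^sub>y + x)\<close>, hence also \<open>\<nabla>(u - v)\<close>, are then
  parallel where \<open>u - v > \<epsilon>\<close>, so \<open>excess \<cdot> (u\<^sub>y + x, y - u\<^sub>x)\<close> has divergence \<open>2 \<cdot> excess\<close>.
  Its integral vanishes, so \<open>excess = 0\<close>, contradicting \<open>u - v > 2 \<epsilon>\<close>.\<close>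

section \<open>Partial derivatives\<close>

definition has_px :: "(real \<times> real \<Rightarrow> real) \<Rightarrow> real \<Rightarrow> real \<times> real \<Rightarrow> bool" where
  "has_px f d p \<longleftrightarrow> ((\<lambda>t. f (t, snd p)) has_real_derivative d) (at (fst p))"

definition has_py :: "(real \<times> real \<Rightarrow> real) \<Rightarrow> real \<Rightarrow> real \<times> real \<Rightarrow> bool" where
  "has_py f d p \<longleftrightarrow> ((\<lambda>t. f (fst p, t)) has_real_derivative d) (at (snd p))"

lemma has_px_imp_px: "has_px f d p \<Longrightarrow> px f p = d"
  unfolding has_px_def px_def by (rule DERIV_imp_deriv)

lemma has_py_imp_py: "has_py f d p \<Longrightarrow> py f p = d"
  unfolding has_py_def py_def by (rule DERIV_imp_deriv)

lemma C1_on_has_px: "C1_on \<Omega> w \<Longrightarrow> p \<in> \<Omega> \<Longrightarrow> has_px w (px w p) p"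
  unfolding C1_on_def has_px_def px_def using DERIV_deriv_iff_real_differentiable by blast

lemma C1_on_has_py: "C1_on \<Omega> w \<Longrightarrow> p \<in> \<Omega> \<Longrightarrow> has_py w (py w p) p"
  unfolding C1_on_def has_py_def py_def using DERIV_deriv_iff_real_differentiable by blast

lemma has_px_unique: "has_px f d p \<Longrightarrow> has_px f e p \<Longrightarrow> d = e"
  unfolding has_px_def using DERIV_unique by blast

lemma has_py_unique: "has_py f d p \<Longrightarrow> has_py f e p \<Longrightarrow> d = e"
  unfolding has_py_def using DERIV_unique by blast

lemma has_px_transform_within_open:
  assumes "has_px f d p" "open U" "p \<in> U" "\<And>q. q \<in> U \<Longrightarrow> f q = g q"
  shows "has_px g d p"
proof -
  have "continuous_on UNIV (\<lambda>t. (t, snd p))"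
    by (intro continuous_intros)
  then have "open ((\<lambda>t. (t, snd p)) -` U)"
    using assms(2) continuous_on_open_vimage[OF open_UNIV] by auto
  with assms show ?thesis
    unfolding has_px_def
    by (intro has_field_derivative_transform_within_open[of "\<lambda>t. f (t, snd p)" d "fst p" _ "\<lambda>t. g (t, snd p)"]) auto
qed

lemma has_py_transform_within_open:
  assumes "has_py f d p" "open U" "p \<in> U" "\<And>q. q \<in> U \<Longrightarrow> f q = g q"
  shows "has_py g d p"
proof -
  have "continuous_on UNIV (\<lambda>t. (fst p, t))"
    by (intro continuous_intros)
  then have "open ((\<lambda>t. (fst p, t)) -` U)"
    using assms(2) continuous_on_open_vimage[OF open_UNIV] by auto
  with assms show ?thesis
    unfolding has_py_def
    by (intro has_field_derivative_transform_within_open[of "\<lambda>t. f (fst p, t)" d "snd p" _ "\<lambda>t. g (fst p, t)"]) auto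
qed

lemma has_px_zero_on_open: "open U \<Longrightarrow> p \<in> U \<Longrightarrow> (\<And>q. q \<in> U \<Longrightarrow> f q = 0) \<Longrightarrow> has_px f 0 p"
  by (rule has_px_transform_within_open[of "\<lambda>_. 0"]) (auto simp: has_px_def)

lemma has_py_zero_on_open: "open U \<Longrightarrow> p \<in> U \<Longrightarrow> (\<And>q. q \<in> U \<Longrightarrow> f q = 0) \<Longrightarrow> has_py f 0 p"
  by (rule has_py_transform_within_open[of "\<lambda>_. 0"]) (auto simp: has_py_def)

lemma has_px_mult:
  "has_px f f' p \<Longrightarrow> has_px g g' p \<Longrightarrow> has_px (\<lambda>q. f q * g q) (f' * g p + f p * g') p"
  unfolding has_px_def by (auto intro!: derivative_eq_intros)

lemma has_py_mult:
  "has_py f f' p \<Longrightarrow> has_py g g' p \<Longrightarrow> has_py (\<lambda>q. f q * g q) (f' * g p + f p * g') p"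
  unfolding has_py_def by (auto intro!: derivative_eq_intros)

lemma has_px_diff: "has_px f f' p \<Longrightarrow> has_px g g' p \<Longrightarrow> has_px (\<lambda>q. f q - g q) (f' - g') p"
  unfolding has_px_def by (auto intro!: derivative_eq_intros)

lemma has_py_diff: "has_py f f' p \<Longrightarrow> has_py g g' p \<Longrightarrow> has_py (\<lambda>q. f q - g q) (f' - g') p"
  unfolding has_py_def by (auto intro!: derivative_eq_intros)

section \<open>Integrals of partial derivatives over boxes\<close>

lemma integral_real_derivative:
  fixes f f' :: "real \<Rightarrow> real"
  assumes "a \<le> b" "\<And>x. x \<in> {a..b} \<Longrightarrow> (f has_real_derivative f' x) (at x)"
  shows "integral {a..b} f' = f b - f a"
  using assms by (intro integral_unique fundamental_theorem_of_calculus)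
    (auto simp: has_real_derivative_iff_has_vector_derivative intro: has_vector_derivative_at_within)

lemma integral_has_px_cbox:
  assumes "a \<le> b" "\<And>p. p \<in> cbox (a, c) (b, d) \<Longrightarrow> has_px f (g p) p"
    and "continuous_on (cbox (a, c) (b, d)) g"
  shows "integral (cbox (a, c) (b, d)) g = integral {c..d} (\<lambda>y. f (b, y) - f (a, y))"
proof -
  have "integral (cbox (a, c) (b, d)) g = integral (cbox a b) (\<lambda>x. integral (cbox c d) (\<lambda>y. g (x, y)))"
    by (rule integral_prod_continuous[OF assms(3)])
  also have "\<dots> = integral (cbox c d) (\<lambda>y. integral (cbox a b) (\<lambda>x. g (x, y)))"
    using integral_swap_continuous[of a c b d "\<lambda>x y. g (x, y)"] assms(3) by simp
  also have "\<dots> = integral {c..d} (\<lambda>y. f (b, y) - f (a, y))"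
    unfolding cbox_interval
  proof (intro integral_cong integral_real_derivative)
    fix x y assume "y \<in> {c..d}" "x \<in> {a..b}"
    then show "((\<lambda>t. f (t, y)) has_real_derivative g (x, y)) (at x)"
      using assms(2)[of "(x, y)"] by (simp add: has_px_def)
  qed (rule assms(1))
  finally show ?thesis .
qed

lemma integral_has_py_cbox:
  assumes "c \<le> d" "\<And>p. p \<in> cbox (a, c) (b, d) \<Longrightarrow> has_py f (g p) p"
    and "continuous_on (cbox (a, c) (b, d)) g"
  shows "integral (cbox (a, c) (b, d)) g = integral {a..b} (\<lambda>x. f (x, d) - f (x, c))"
proof -
  have "integral (cbox (a, c) (b, d)) g = integral (cbox a b) (\<lambda>x. integral (cbox c d) (\<lambda>y. g (x, y)))"
    by (rule integral_prod_continuous[OF assms(3)])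
  also have "\<dots> = integral {a..b} (\<lambda>x. f (x, d) - f (x, c))"
    unfolding cbox_interval
  proof (intro integral_cong integral_real_derivative)
    fix x y assume "x \<in> {a..b}" "y \<in> {c..d}"
    then show "((\<lambda>t. f (x, t)) has_real_derivative g (x, y)) (at y)"
      using assms(2)[of "(x, y)"] by (simp add: has_py_def)
  qed (rule assms(1))
  finally show ?thesis .
qed

lemma box_Pair_iff: "(x, y) \<in> box (a, c) (b, d) \<longleftrightarrow> x \<in> box a b \<and> y \<in> box c d"
  for x y a b c d :: "'a::euclidean_space"
  by (auto simp: mem_box Basis_prod_def ball_Un)

lemma has_px_zero_extension:
  assumes "open U" "closed Z" "Z \<subseteq> U"
    and "\<And>q. q \<in> U \<Longrightarrow> has_px f (f' q) q" "\<And>q. q \<in> U - Z \<Longrightarrow> f q = 0"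
  shows "has_px (\<lambda>q. if q \<in> U then f q else 0) (if p \<in> U then f' p else 0) p"
proof (cases "p \<in> U")
  case True
  have "has_px (\<lambda>q. if q \<in> U then f q else 0) (f' p) p"
    by (rule has_px_transform_within_open[OF assms(4)[OF True] assms(1) True]) simp
  with True show ?thesis
    by simp
next
  case False
  then show ?thesis
    using assms(2,3,5) by (auto intro!: has_px_zero_on_open[of "- Z"])
qed

lemma has_py_zero_extension:
  assumes "open U" "closed Z" "Z \<subseteq> U"
    and "\<And>q. q \<in> U \<Longrightarrow> has_py f (f' q) q" "\<And>q. q \<in> U - Z \<Longrightarrow> f q = 0"
  shows "has_py (\<lambda>q. if q \<in> U then f q else 0) (if p \<in> U then f' p else 0) p"
proof (cases "p \<in> U")
  case True
  have "has_py (\<lambda>q. if q \<in> U then f q else 0) (f' p) p"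
    by (rule has_py_transform_within_open[OF assms(4)[OF True] assms(1) True]) simp
  with True show ?thesis
    by simp
next
  case False
  then show ?thesis
    using assms(2,3,5) by (auto intro!: has_py_zero_on_open[of "- Z"])
qed

lemma continuous_on_zero_extension:
  fixes g :: "'a::topological_space \<Rightarrow> 'b::real_normed_vector"
  assumes "open U" "closed Z" "Z \<subseteq> U" "continuous_on U g" "\<And>q. q \<in> U - Z \<Longrightarrow> g q = 0"
  shows "continuous_on UNIV (\<lambda>q. if q \<in> U then g q else 0)"
proof -
  have "continuous_on U (\<lambda>q. if q \<in> U then g q else 0)"
    using assms(4) by (rule continuous_on_eq) simp
  moreover have "continuous_on (- Z) (\<lambda>q. if q \<in> U then g q else 0)"
    using assms(5) by (intro continuous_on_eq[OF continuous_on_const]) auto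
  ultimately have "continuous_on (U \<union> - Z) (\<lambda>q. if q \<in> U then g q else 0)"
    using assms(1,2) by (intro continuous_on_open_Un) auto
  moreover have "U \<union> - Z = UNIV"
    using assms(3) by auto
  ultimately show ?thesis
    by simp
qed

lemma integrable_continuous_UNIV: "continuous_on UNIV f \<Longrightarrow> f integrable_on cbox a b"
  for f :: "'a::euclidean_space \<Rightarrow> 'b::banach"
  by (rule integrable_continuous[OF continuous_on_subset[OF _ subset_UNIV]])

lemma has_integral_px_zero_extension_eq_0:
  assumes "open U" "closed Z" "Z \<subseteq> U" "Z \<subseteq> box (a1, a2) (b1, b2)"
    and "\<And>p. p \<in> U \<Longrightarrow> has_px F (Fx p) p" "continuous_on U Fx" "\<And>p. p \<in> U - Z \<Longrightarrow> F p = 0"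
  shows "continuous_on UNIV (\<lambda>p. if p \<in> U then Fx p else 0)"
    and "((\<lambda>p. if p \<in> U then Fx p else 0) has_integral 0) (cbox (a1, a2) (b1, b2))"
proof -
  let ?R = "cbox (a1, a2) (b1, b2)"
  have "Fx p = 0" if "p \<in> U - Z" for p
  proof -
    have "has_px F 0 p"
      using has_px_zero_on_open[of "U - Z" p F] assms(1,2,7) that by auto
    then show ?thesis
      using has_px_unique[OF assms(5)] that by blast
  qed
  then show cont: "continuous_on UNIV (\<lambda>p. if p \<in> U then Fx p else 0)"
    using assms(1-3,6) by (intro continuous_on_zero_extension)
  show "((\<lambda>p. if p \<in> U then Fx p else 0) has_integral 0) ?R"
  proof (cases "a1 \<le> b1")
    case True
    have "has_px (\<lambda>q. if q \<in> U then F q else 0) (if p \<in> U then Fx p else 0) p" for p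
      using assms(7) by (intro has_px_zero_extension[OF assms(1-3,5)])
    then have "integral ?R (\<lambda>p. if p \<in> U then Fx p else 0)
        = integral {a2..b2} (\<lambda>y. (if (b1, y) \<in> U then F (b1, y) else 0) - (if (a1, y) \<in> U then F (a1, y) else 0))"
      using True cont by (intro integral_has_px_cbox) (auto intro: continuous_on_subset)
    also have "\<dots> = 0"
    proof -
      have "(a1, y) \<notin> Z" "(b1, y) \<notin> Z" for y
        using assms(4) by (auto simp: box_Pair_iff)
      moreover have "(if q \<in> U then F q else 0) = 0" if "q \<notin> Z" for q
        using assms(7) that by auto
      ultimately show ?thesis
        by simp
    qed
    finally show ?thesis
      using integrable_integral[OF integrable_continuous_UNIV[OF cont, of "(a1, a2)" "(b1, b2)"]] by simp
  next
    case False
    then have "?R = {}"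
      by (auto simp: cbox_Pair_eq_0)
    then show ?thesis
      by simp
  qed
qed

lemma has_integral_py_zero_extension_eq_0:
  assumes "open U" "closed Z" "Z \<subseteq> U" "Z \<subseteq> box (a1, a2) (b1, b2)"
    and "\<And>p. p \<in> U \<Longrightarrow> has_py F (Fy p) p" "continuous_on U Fy" "\<And>p. p \<in> U - Z \<Longrightarrow> F p = 0"
  shows "continuous_on UNIV (\<lambda>p. if p \<in> U then Fy p else 0)"
    and "((\<lambda>p. if p \<in> U then Fy p else 0) has_integral 0) (cbox (a1, a2) (b1, b2))"
proof -
  let ?R = "cbox (a1, a2) (b1, b2)"
  have "Fy p = 0" if "p \<in> U - Z" for p
  proof -
    have "has_py F 0 p"
      using has_py_zero_on_open[of "U - Z" p F] assms(1,2,7) that by auto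
    then show ?thesis
      using has_py_unique[OF assms(5)] that by blast
  qed
  then show cont: "continuous_on UNIV (\<lambda>p. if p \<in> U then Fy p else 0)"
    using assms(1-3,6) by (intro continuous_on_zero_extension)
  show "((\<lambda>p. if p \<in> U then Fy p else 0) has_integral 0) ?R"
  proof (cases "a2 \<le> b2")
    case True
    have "has_py (\<lambda>q. if q \<in> U then F q else 0) (if p \<in> U then Fy p else 0) p" for p
      using assms(7) by (intro has_py_zero_extension[OF assms(1-3,5)])
    then have "integral ?R (\<lambda>p. if p \<in> U then Fy p else 0)
        = integral {a1..b1} (\<lambda>x. (if (x, b2) \<in> U then F (x, b2) else 0) - (if (x, a2) \<in> U then F (x, a2) else 0))"
      using True cont by (intro integral_has_py_cbox) (auto intro: continuous_on_subset)
    also have "\<dots> = 0"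
    proof -
      have "(x, a2) \<notin> Z" "(x, b2) \<notin> Z" for x
        using assms(4) by (auto simp: box_Pair_iff)
      moreover have "(if q \<in> U then F q else 0) = 0" if "q \<notin> Z" for q
        using assms(7) that by auto
      ultimately show ?thesis
        by simp
    qed
    finally show ?thesis
      using integrable_integral[OF integrable_continuous_UNIV[OF cont, of "(a1, a2)" "(b1, b2)"]] by simp
  next
    case False
    then have "?R = {}"
      by (auto simp: cbox_Pair_eq_0)
    then show ?thesis
      by simp
  qed
qed

theorem divergence_integral_eq_0:
  fixes F1 F2 F1x F2y :: "real \<times> real \<Rightarrow> real"
  assumes "open U" "closed Z" "Z \<subseteq> U" "Z \<subseteq> box (a1, a2) (b1, b2)"
    and "\<And>p. p \<in> U \<Longrightarrow> has_px F1 (F1x p) p" "\<And>p. p \<in> U \<Longrightarrow> has_py F2 (F2y p) p"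
    and "continuous_on U F1x" "continuous_on U F2y"
    and "\<And>p. p \<in> U - Z \<Longrightarrow> F1 p = 0 \<and> F2 p = 0"
  defines "D \<equiv> \<lambda>p. if p \<in> U then F1x p + F2y p else 0"
  shows "continuous_on UNIV D" "(D has_integral 0) (cbox (a1, a2) (b1, b2))"
proof -
  have vanish: "F1 p = 0" "F2 p = 0" if "p \<in> U - Z" for p
    using assms(9)[OF that] by simp_all
  note x = has_integral_px_zero_extension_eq_0[OF assms(1-5,7) vanish(1)]
  note y = has_integral_py_zero_extension_eq_0[OF assms(1-4,6,8) vanish(2)]
  have D_eq: "D = (\<lambda>p. (if p \<in> U then F1x p else 0) + (if p \<in> U then F2y p else 0))"
    by (auto simp: D_def)
  show "continuous_on UNIV D"
    unfolding D_eq using x(1) y(1) by (intro continuous_intros)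
  show "(D has_integral 0) (cbox (a1, a2) (b1, b2))"
    unfolding D_eq using has_integral_add[OF x(2) y(2)] by simp
qed

lemma continuous_pos_cbox_nbhd:
  fixes f :: "'a::euclidean_space \<Rightarrow> real"
  assumes "open U" "q \<in> U" "continuous_on U f" "f q > 0"
  obtains a b where "q \<in> box a b" "cbox a b \<subseteq> U" "measure lborel (cbox a b) > 0"
    "\<And>p. p \<in> cbox a b \<Longrightarrow> f q / 2 \<le> f p"
proof -
  have "open (U \<inter> f -` {f q / 2 <..})"
    using assms(1,3) by (intro continuous_open_preimage) auto
  moreover have "q \<in> U \<inter> f -` {f q / 2 <..}"
    using assms(2,4) by simp
  ultimately obtain a b where "cbox a b \<subseteq> U \<inter> f -` {f q / 2 <..}" "q \<in> box a b"
      "\<forall>i\<in>Basis. a \<bullet> i < b \<bullet> i"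
    by (rule open_contains_cbox)
  then show ?thesis
    by (intro that[of a b] content_pos_lt) auto
qed

lemma integral_px_py_cbox:
  assumes "C2_on \<Omega> u" "cbox (a, c) (b, d) \<subseteq> \<Omega>" "a \<le> b" "c \<le> d"
  shows "integral (cbox (a, c) (b, d)) (px (py u)) = u (b, d) - u (a, d) - u (b, c) + u (a, c)"
proof -
  have C1: "C1_on \<Omega> u" "C1_on \<Omega> (py u)"
    using assms(1) by (auto simp: C2_on_def)
  have "integral (cbox (a, c) (b, d)) (px (py u)) = integral {c..d} (\<lambda>y. py u (b, y) - py u (a, y))"
    using assms(2,3) C1_on_has_px[OF C1(2)] C1_on_def[of \<Omega> "py u"] C1(2)
    by (intro integral_has_px_cbox) (auto intro: continuous_on_subset)
  also have "\<dots> = u (b, d) - u (a, d) - (u (b, c) - u (a, c))"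
  proof (rule integral_real_derivative[where f = "\<lambda>y. u (b, y) - u (a, y)", OF assms(4)])
    fix y assume "y \<in> {c..d}"
    then have "(b, y) \<in> \<Omega>" "(a, y) \<in> \<Omega>"
      using assms(2,3) by auto
    then show "((\<lambda>y. u (b, y) - u (a, y)) has_real_derivative py u (b, y) - py u (a, y)) (at y)"
      using C1_on_has_py[OF C1(1)] by (auto simp: has_py_def intro!: derivative_eq_intros)
  qed
  finally show ?thesis
    by simp
qed

lemma integral_py_px_cbox:
  assumes "C2_on \<Omega> u" "cbox (a, c) (b, d) \<subseteq> \<Omega>" "a \<le> b" "c \<le> d"
  shows "integral (cbox (a, c) (b, d)) (py (px u)) = u (b, d) - u (a, d) - u (b, c) + u (a, c)"
proof -
  have C1: "C1_on \<Omega> u" "C1_on \<Omega> (px u)"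
    using assms(1) by (auto simp: C2_on_def)
  have "integral (cbox (a, c) (b, d)) (py (px u)) = integral {a..b} (\<lambda>x. px u (x, d) - px u (x, c))"
    using assms(2,4) C1_on_has_py[OF C1(2)] C1_on_def[of \<Omega> "px u"] C1(2)
    by (intro integral_has_py_cbox) (auto intro: continuous_on_subset)
  also have "\<dots> = u (b, d) - u (b, c) - (u (a, d) - u (a, c))"
  proof (rule integral_real_derivative[where f = "\<lambda>x. u (x, d) - u (x, c)", OF assms(3)])
    fix x assume "x \<in> {a..b}"
    then have "(x, d) \<in> \<Omega>" "(x, c) \<in> \<Omega>"
      using assms(2,4) by auto
    then show "((\<lambda>x. u (x, d) - u (x, c)) has_real_derivative px u (x, d) - px u (x, c)) (at x)"
      using C1_on_has_px[OF C1(1)] by (auto simp: has_px_def intro!: derivative_eq_intros)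
  qed
  finally show ?thesis
    by simp
qed

text \<open>Schwarz's theorem: over every box both mixed partials integrate to the same rectangle
  increment of \<open>u\<close>.\<close>

theorem px_py_commute:
  assumes "open \<Omega>" "C2_on \<Omega> u" "q \<in> \<Omega>"
  shows "px (py u) q = py (px u) q"
proof (rule ccontr)
  assume "px (py u) q \<noteq> py (px u) q"
  define s where "s = sgn (px (py u) q - py (px u) q)"
  define f where "f p = s * (px (py u) p - py (px u) p)" for p
  have "f q > 0"
    using \<open>px (py u) q \<noteq> py (px u) q\<close> by (auto simp: f_def s_def sgn_if)
  moreover have cont: "continuous_on \<Omega> f"
    using assms(2) unfolding f_def C2_on_def C1_on_def by (auto intro!: continuous_intros)
  ultimately obtain a b where ab: "q \<in> box a b" "cbox a b \<subseteq> \<Omega>" "measure lborel (cbox a b) > 0"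
    "\<And>p. p \<in> cbox a b \<Longrightarrow> f q / 2 \<le> f p"
    using continuous_pos_cbox_nbhd[OF assms(1,3)] by blast
  obtain a1 a2 b1 b2 where ab_eq: "a = (a1, a2)" "b = (b1, b2)"
    by (cases a, cases b)
  have le: "a1 \<le> b1" "a2 \<le> b2"
    using ab(1) by (cases q; auto simp: ab_eq box_Pair_iff)+
  have "measure lborel (cbox a b) * (f q / 2) = integral (cbox a b) (\<lambda>_. f q / 2)"
    by simp
  also have "\<dots> \<le> integral (cbox a b) f"
    using ab(4) cont ab(2) by (intro integral_le integrable_continuous) (auto intro: continuous_on_subset)
  also have "\<dots> = s * (integral (cbox a b) (px (py u)) - integral (cbox a b) (py (px u)))"
    using cont ab(2) assms(2) unfolding f_def C2_on_def C1_on_def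
    by (subst integral_diff[symmetric]) (auto intro!: integrable_continuous intro: continuous_on_subset)
  also have "\<dots> = 0"
    using integral_px_py_cbox[OF assms(2)] integral_py_px_cbox[OF assms(2)] ab(2) le
    by (simp add: ab_eq)
  finally show False
    using ab(3) \<open>f q > 0\<close> by (simp add: mult_le_0_iff)
qed

section \<open>Smooth cutoff functions\<close>

definition pos_sq :: "real \<Rightarrow> real" where
  "pos_sq t = (max t 0)\<^sup>2"

lemma DERIV_pos_sq: "(pos_sq has_real_derivative 2 * max t 0) (at t)"
proof (cases "t = 0")
  case True
  have "\<forall>z. pos_sq z - pos_sq 0 = max z 0 * (z - 0)"
    by (auto simp: pos_sq_def power2_eq_square max_def)
  moreover have "isCont (\<lambda>z. max z (0::real)) 0"
    by (intro continuous_intros)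
  ultimately show ?thesis
    using True CARAT_DERIV[of pos_sq 0 0] by auto
next
  case False
  then have ev: "\<forall>\<^sub>F z in nhds t. pos_sq z = (if t > 0 then z\<^sup>2 else 0)"
    using eventually_nhds_in_open[of "{0<..}" t] eventually_nhds_in_open[of "{..<0}" t]
    by (cases "t > 0") (auto elim!: eventually_mono simp: pos_sq_def)
  moreover have "((\<lambda>z. if t > 0 then z\<^sup>2 else 0) has_real_derivative 2 * max t 0) (at t)"
    using False by (cases "t > 0") (auto intro!: derivative_eq_intros)
  ultimately show ?thesis
    using DERIV_cong_ev[OF refl ev refl] by simp
qed

lemma DERIV_pos_sq_chain [derivative_intros]:
  "(f has_real_derivative f') (at x within s) \<Longrightarrow>
   ((\<lambda>x. pos_sq (f x)) has_real_derivative 2 * max (f x) 0 * f') (at x within s)"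
  using DERIV_chain2[OF DERIV_pos_sq] by blast

lemma continuous_on_pos_sq [continuous_intros]:
  "continuous_on s f \<Longrightarrow> continuous_on s (\<lambda>x. pos_sq (f x))"
  unfolding pos_sq_def by (intro continuous_intros)

lemma pos_sq_nonneg: "0 \<le> pos_sq t"
  by (simp add: pos_sq_def)

lemma pos_sq_eq_0: "t \<le> 0 \<Longrightarrow> pos_sq t = 0"
  by (simp add: pos_sq_def)

definition smooth_step :: "real \<Rightarrow> real" where
  "smooth_step s = pos_sq s / (pos_sq s + pos_sq (1 - s))"

definition smooth_step' :: "real \<Rightarrow> real" where
  "smooth_step' s = (2 * max s 0 * pos_sq (1 - s) + 2 * max (1 - s) 0 * pos_sq s)
     / (pos_sq s + pos_sq (1 - s))\<^sup>2"

lemma smooth_step_denom_pos: "pos_sq s + pos_sq (1 - s) > 0"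
  by (cases "s > 0") (auto simp: pos_sq_def intro: add_pos_nonneg add_nonneg_pos)

lemma DERIV_smooth_step: "(smooth_step has_real_derivative smooth_step' s) (at s)"
proof -
  have D: "pos_sq s + pos_sq (1 - s) \<noteq> 0"
    using smooth_step_denom_pos[of s] by linarith
  have "((\<lambda>s. pos_sq s / (pos_sq s + pos_sq (1 - s))) has_real_derivative smooth_step' s) (at s)"
    by (rule derivative_eq_intros refl | simp add: D)+
      (use D in \<open>simp add: smooth_step'_def field_simps power2_eq_square\<close>)
  then show ?thesis
    unfolding smooth_step_def[abs_def] .
qed

lemma DERIV_smooth_step_chain [derivative_intros]:
  "(f has_real_derivative f') (at x within s) \<Longrightarrow>
   ((\<lambda>x. smooth_step (f x)) has_real_derivative smooth_step' (f x) * f') (at x within s)"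
  using DERIV_chain2[OF DERIV_smooth_step] by blast

lemma continuous_on_smooth_step: "continuous_on UNIV smooth_step"
  using smooth_step_denom_pos unfolding smooth_step_def[abs_def]
  by (intro continuous_intros) (metis less_irrefl)

lemma continuous_on_smooth_step': "continuous_on UNIV smooth_step'"
proof -
  have "(pos_sq s + pos_sq (1 - s))\<^sup>2 \<noteq> 0" for s
    using smooth_step_denom_pos[of s] by simp
  then show ?thesis
    unfolding smooth_step'_def[abs_def] by (intro continuous_intros) auto
qed

lemma smooth_step_eq_0: "s \<le> 0 \<Longrightarrow> smooth_step s = 0"
  by (simp add: smooth_step_def pos_sq_eq_0)

lemma smooth_step_eq_1: "s \<ge> 1 \<Longrightarrow> smooth_step s = 1"
  using smooth_step_denom_pos[of s] by (simp add: smooth_step_def pos_sq_eq_0)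

lemma smooth_step_bounds: "0 \<le> smooth_step s" "smooth_step s \<le> 1"
  using smooth_step_denom_pos[of s] pos_sq_nonneg[of s] pos_sq_nonneg[of "1 - s"]
  by (auto simp: smooth_step_def)

lemma smooth_step'_eq_0: "s \<le> 0 \<or> s \<ge> 1 \<Longrightarrow> smooth_step' s = 0"
  by (auto simp: smooth_step'_def pos_sq_def max_def)

lemma smooth_step'_bounded: obtains C where "C > 0" "\<And>s. \<bar>smooth_step' s\<bar> \<le> C"
proof -
  have "compact (smooth_step' ` {0..1})"
    by (rule compact_continuous_image) (use continuous_on_smooth_step' in \<open>auto intro: continuous_on_subset\<close>)
  then obtain B where B: "\<forall>x\<in>smooth_step' ` {0..1}. norm x \<le> B"
    using compact_imp_bounded bounded_iff by blast
  have "\<bar>smooth_step' s\<bar> \<le> max B 1" for s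
  proof (cases "s \<in> {0..1}")
    case True
    then have "\<bar>smooth_step' s\<bar> \<le> B"
      using B by simp
    then show ?thesis
      by linarith
  next
    case False
    then show ?thesis
      using smooth_step'_eq_0[of s] by auto
  qed
  then show ?thesis
    by (intro that[of "max B 1"]) auto
qed

text \<open>\<open>bump_arg c r p = ((|p - c| / r)\<^sup>2 - 1) / 3\<close> runs from 0 at radius \<open>r\<close> to 1 at radius
  \<open>2 r\<close>; it is written in coordinates so that its partial derivatives are polynomial.\<close>

definition bump_arg :: "real \<times> real \<Rightarrow> real \<Rightarrow> real \<times> real \<Rightarrow> real" where
  "bump_arg c r p = (((fst p - fst c)\<^sup>2 + (snd p - snd c)\<^sup>2) / r\<^sup>2 - 1) / 3"

definition bump :: "real \<times> real \<Rightarrow> real \<Rightarrow> real \<times> real \<Rightarrow> real" where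
  "bump c r p = 1 - smooth_step (bump_arg c r p)"

definition bump_dx :: "real \<times> real \<Rightarrow> real \<Rightarrow> real \<times> real \<Rightarrow> real" where
  "bump_dx c r p = - smooth_step' (bump_arg c r p) * (2 * (fst p - fst c) / r\<^sup>2 / 3)"

definition bump_dy :: "real \<times> real \<Rightarrow> real \<Rightarrow> real \<times> real \<Rightarrow> real" where
  "bump_dy c r p = - smooth_step' (bump_arg c r p) * (2 * (snd p - snd c) / r\<^sup>2 / 3)"

lemma dist_Pair_sqrt: "dist p c = sqrt ((fst p - fst c)\<^sup>2 + (snd p - snd c)\<^sup>2)"
  by (cases p, cases c) (simp add: dist_Pair_Pair dist_real_def)

lemma bump_arg_dist: "r > 0 \<Longrightarrow> bump_arg c r p = ((dist p c / r)\<^sup>2 - 1) / 3"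
  by (simp add: bump_arg_def dist_Pair_sqrt power_divide)

lemma has_px_bump: "r > 0 \<Longrightarrow> has_px (bump c r) (bump_dx c r p) p"
  unfolding has_px_def bump_def[abs_def] bump_dx_def bump_arg_def
  by (auto intro!: derivative_eq_intros simp: field_simps)

lemma has_py_bump: "r > 0 \<Longrightarrow> has_py (bump c r) (bump_dy c r p) p"
  unfolding has_py_def bump_def[abs_def] bump_dy_def bump_arg_def
  by (auto intro!: derivative_eq_intros simp: field_simps)

lemma bump_eq_1: "r > 0 \<Longrightarrow> dist p c \<le> r \<Longrightarrow> bump c r p = 1"
  by (simp add: bump_def bump_arg_dist power_le_one smooth_step_eq_0)

lemma bump_arg_ge_1: "r > 0 \<Longrightarrow> dist p c \<ge> 2 * r \<Longrightarrow> bump_arg c r p \<ge> 1"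
proof -
  assume r: "r > 0" "dist p c \<ge> 2 * r"
  have "2 \<le> dist p c / r"
    using r by (simp add: field_simps)
  then have "2\<^sup>2 \<le> (dist p c / r)\<^sup>2"
    by (rule power_mono) simp
  then show ?thesis
    by (simp add: bump_arg_dist[OF r(1)])
qed

lemma bump_vanishes:
  assumes "r > 0" "dist p c \<ge> 2 * r"
  shows "bump c r p = 0" "bump_dx c r p = 0" "bump_dy c r p = 0"
  using bump_arg_ge_1[OF assms]
  by (simp_all add: bump_def bump_dx_def bump_dy_def smooth_step_eq_1 smooth_step'_eq_0)

lemma bump_bounds: "0 \<le> bump c r p" "bump c r p \<le> 1"
  using smooth_step_bounds by (auto simp: bump_def)

lemma continuous_on_bump: "r > 0 \<Longrightarrow> continuous_on UNIV (bump c r)"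
  unfolding bump_def[abs_def] bump_arg_def
  by (intro continuous_intros continuous_on_compose2[OF continuous_on_smooth_step]) auto

lemma continuous_on_bump_grad: "r > 0 \<Longrightarrow> continuous_on UNIV (\<lambda>p. \<bar>bump_dx c r p\<bar> + \<bar>bump_dy c r p\<bar>)"
  unfolding bump_dx_def bump_dy_def bump_arg_def
  by (intro continuous_intros continuous_on_compose2[OF continuous_on_smooth_step']) auto

lemma continuous_on_bump_dx: "r > 0 \<Longrightarrow> continuous_on UNIV (bump_dx c r)"
  unfolding bump_dx_def[abs_def] bump_arg_def
  by (intro continuous_intros continuous_on_compose2[OF continuous_on_smooth_step']) auto

lemma continuous_on_bump_dy: "r > 0 \<Longrightarrow> continuous_on UNIV (bump_dy c r)"
  unfolding bump_dy_def[abs_def] bump_arg_def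
  by (intro continuous_intros continuous_on_compose2[OF continuous_on_smooth_step']) auto

lemma abs_fst_diff_le_dist: "\<bar>fst p - fst c\<bar> \<le> dist p c"
  and abs_snd_diff_le_dist: "\<bar>snd p - snd c\<bar> \<le> dist p c"
  unfolding dist_Pair_sqrt by (auto intro: real_sqrt_sum_squares_ge1 real_sqrt_sum_squares_ge2 simp: real_le_rsqrt)

lemma bump_grad_bound:
  assumes r: "r > 0" and C: "\<And>s. \<bar>smooth_step' s\<bar> \<le> C"
  shows "\<bar>bump_dx c r p\<bar> + \<bar>bump_dy c r p\<bar> \<le> 4 * C / r"
proof (cases "dist p c \<ge> 2 * r")
  case True
  have "C \<ge> 0"
    using C[of 0] by linarith
  then show ?thesis
    using bump_vanishes[OF r True] r by simp
next
  case False
  then have near: "\<bar>fst p - fst c\<bar> + \<bar>snd p - snd c\<bar> \<le> 4 * r"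
    using abs_fst_diff_le_dist[of p c] abs_snd_diff_le_dist[of p c] by linarith
  have "\<bar>bump_dx c r p\<bar> + \<bar>bump_dy c r p\<bar>
      = \<bar>smooth_step' (bump_arg c r p)\<bar> * (2 / (3 * r\<^sup>2)) * (\<bar>fst p - fst c\<bar> + \<bar>snd p - snd c\<bar>)"
    unfolding bump_dx_def bump_dy_def abs_minus_cancel abs_mult abs_divide
    by (simp add: algebra_simps add_divide_distrib)
  also have "\<dots> \<le> C * (2 / (3 * r\<^sup>2)) * (4 * r)"
    using C[of "bump_arg c r p"] C[of 0] near by (intro mult_mono mult_right_mono) auto
  also have "\<dots> \<le> 4 * C / r"
    using r C[of 0] by (simp add: power2_eq_square field_simps)
  finally show ?thesis .
qed

lemma integral_le_bound_times_content:
  fixes f :: "'a::euclidean_space \<Rightarrow> real"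
  assumes "continuous_on UNIV f" "\<And>p. 0 \<le> f p" "\<And>p. f p \<le> K" "\<And>p. p \<notin> cbox c d \<Longrightarrow> f p = 0"
  shows "integral (cbox a b) f \<le> K * measure lborel (cbox c d)"
proof -
  obtain a' b' where ab': "cbox c d \<inter> cbox a b = cbox a' b'"
    using Int_interval by blast
  have "integral (cbox a b) f = integral (cbox a b) (\<lambda>p. if p \<in> cbox c d then f p else 0)"
    using assms(4) by (intro integral_cong) auto
  also have "\<dots> = integral (cbox a' b') f"
    by (simp add: integral_restrict_Int ab')
  also have "\<dots> \<le> integral (cbox a' b') (\<lambda>_. K)"
    using assms(1,3) by (intro integral_le integrable_continuous) (auto intro: continuous_on_subset)
  also have "\<dots> = K * measure lborel (cbox a' b')"
    by simp
  also have "\<dots> \<le> K * measure lborel (cbox c d)"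
    using assms(2,3) ab' by (intro mult_left_mono content_subset) (auto intro: order_trans)
  finally show ?thesis .
qed

lemma integral_bump_grad_le:
  assumes r: "r > 0" and C: "\<And>s. \<bar>smooth_step' s\<bar> \<le> C"
  shows "integral (cbox a b) (\<lambda>p. \<bar>bump_dx c r p\<bar> + \<bar>bump_dy c r p\<bar>) \<le> 64 * C * r"
proof -
  let ?Q = "cbox (fst c - 2 * r, snd c - 2 * r) (fst c + 2 * r, snd c + 2 * r)"
  have "p \<notin> ?Q \<Longrightarrow> dist p c \<ge> 2 * r" for p
    using abs_fst_diff_le_dist[of p c] abs_snd_diff_le_dist[of p c]
    by (cases p) (auto simp: abs_le_iff)
  then have "integral (cbox a b) (\<lambda>p. \<bar>bump_dx c r p\<bar> + \<bar>bump_dy c r p\<bar>) \<le> 4 * C / r * measure lborel ?Q"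
    using bump_grad_bound[OF r C] bump_vanishes[OF r]
    by (intro integral_le_bound_times_content continuous_on_bump_grad[OF r]) auto
  also have "\<dots> = 64 * C * r"
    using r by (simp add: content_Pair power2_eq_square)
  finally show ?thesis .
qed

definition cutoff :: "nat set \<Rightarrow> (nat \<Rightarrow> real \<times> real) \<Rightarrow> (nat \<Rightarrow> real) \<Rightarrow> real \<times> real \<Rightarrow> real" where
  "cutoff F c r p = 1 - smooth_step (\<Sum>i\<in>F. bump (c i) (r i) p)"

definition cutoff_dx :: "nat set \<Rightarrow> (nat \<Rightarrow> real \<times> real) \<Rightarrow> (nat \<Rightarrow> real) \<Rightarrow> real \<times> real \<Rightarrow> real" where
  "cutoff_dx F c r p = - smooth_step' (\<Sum>i\<in>F. bump (c i) (r i) p) * (\<Sum>i\<in>F. bump_dx (c i) (r i) p)"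

definition cutoff_dy :: "nat set \<Rightarrow> (nat \<Rightarrow> real \<times> real) \<Rightarrow> (nat \<Rightarrow> real) \<Rightarrow> real \<times> real \<Rightarrow> real" where
  "cutoff_dy F c r p = - smooth_step' (\<Sum>i\<in>F. bump (c i) (r i) p) * (\<Sum>i\<in>F. bump_dy (c i) (r i) p)"

locale bump_family =
  fixes F :: "nat set" and c :: "nat \<Rightarrow> real \<times> real" and r :: "nat \<Rightarrow> real"
  assumes finite_F: "finite F" and r_pos: "\<And>i. i \<in> F \<Longrightarrow> r i > 0"
begin

lemma has_px_cutoff: "has_px (cutoff F c r) (cutoff_dx F c r p) p"
proof -
  have "((\<lambda>t. \<Sum>i\<in>F. bump (c i) (r i) (t, snd p)) has_real_derivative (\<Sum>i\<in>F. bump_dx (c i) (r i) p))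
      (at (fst p))"
    by (rule DERIV_sum) (use has_px_bump r_pos in \<open>auto simp: has_px_def\<close>)
  from DERIV_diff[OF DERIV_const[of 1] DERIV_smooth_step_chain[OF this]] show ?thesis
    unfolding has_px_def cutoff_def[abs_def] cutoff_dx_def by simp
qed

lemma has_py_cutoff: "has_py (cutoff F c r) (cutoff_dy F c r p) p"
proof -
  have "((\<lambda>t. \<Sum>i\<in>F. bump (c i) (r i) (fst p, t)) has_real_derivative (\<Sum>i\<in>F. bump_dy (c i) (r i) p))
      (at (snd p))"
    by (rule DERIV_sum) (use has_py_bump r_pos in \<open>auto simp: has_py_def\<close>)
  from DERIV_diff[OF DERIV_const[of 1] DERIV_smooth_step_chain[OF this]] show ?thesis
    unfolding has_py_def cutoff_def[abs_def] cutoff_dy_def by simp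
qed

lemma continuous_on_sum_bump: "continuous_on UNIV (\<lambda>p. \<Sum>i\<in>F. bump (c i) (r i) p)"
  using continuous_on_bump r_pos by (intro continuous_on_sum) auto

lemma continuous_on_cutoff:
  "continuous_on UNIV (cutoff F c r)" "continuous_on UNIV (cutoff_dx F c r)"
  "continuous_on UNIV (cutoff_dy F c r)"
  unfolding cutoff_def[abs_def] cutoff_dx_def[abs_def] cutoff_dy_def[abs_def]
  using continuous_on_bump_dx continuous_on_bump_dy r_pos
  by (intro continuous_intros continuous_on_sum continuous_on_sum_bump
      continuous_on_compose2[OF continuous_on_smooth_step] continuous_on_compose2[OF continuous_on_smooth_step'];
      auto)+

lemma cutoff_vanishes:
  assumes "p \<in> (\<Union>i\<in>F. ball (c i) (r i))"
  shows "cutoff F c r p = 0 \<and> cutoff_dx F c r p = 0 \<and> cutoff_dy F c r p = 0"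
proof -
  obtain i where i: "i \<in> F" "dist p (c i) \<le> r i"
    using assms by (auto simp: dist_commute less_imp_le)
  have "1 = bump (c i) (r i) p"
    using bump_eq_1[of "r i" p "c i"] i r_pos by auto
  also have "\<dots> \<le> (\<Sum>j\<in>F. bump (c j) (r j) p)"
    by (rule member_le_sum) (use i finite_F bump_bounds in auto)
  finally show ?thesis
    by (simp add: cutoff_def cutoff_dx_def cutoff_dy_def smooth_step_eq_1 smooth_step'_eq_0)
qed

lemma cutoff_eq_1: "(\<And>i. i \<in> F \<Longrightarrow> dist p (c i) \<ge> 2 * r i) \<Longrightarrow> cutoff F c r p = 1"
  using r_pos bump_vanishes by (simp add: cutoff_def smooth_step_eq_0)

lemma cutoff_nonneg: "0 \<le> cutoff F c r p"
  using smooth_step_bounds by (simp add: cutoff_def)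

lemma cutoff_grad_le:
  assumes "\<And>s. \<bar>smooth_step' s\<bar> \<le> C"
  shows "\<bar>cutoff_dx F c r p\<bar> + \<bar>cutoff_dy F c r p\<bar> \<le> C * (\<Sum>i\<in>F. \<bar>bump_dx (c i) (r i) p\<bar> + \<bar>bump_dy (c i) (r i) p\<bar>)"
proof -
  let ?s = "\<bar>smooth_step' (\<Sum>i\<in>F. bump (c i) (r i) p)\<bar>"
  have "0 \<le> C"
    using assms[of 0] by linarith
  have "\<bar>cutoff_dx F c r p\<bar> + \<bar>cutoff_dy F c r p\<bar>
      = ?s * (\<bar>\<Sum>i\<in>F. bump_dx (c i) (r i) p\<bar> + \<bar>\<Sum>i\<in>F. bump_dy (c i) (r i) p\<bar>)"
    by (simp add: cutoff_dx_def cutoff_dy_def abs_mult distrib_left)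
  also have "\<dots> \<le> C * ((\<Sum>i\<in>F. \<bar>bump_dx (c i) (r i) p\<bar>) + (\<Sum>i\<in>F. \<bar>bump_dy (c i) (r i) p\<bar>))"
    using assms \<open>0 \<le> C\<close> by (intro mult_mono add_mono sum_abs) (auto intro: add_nonneg_nonneg sum_nonneg)
  finally show ?thesis
    by (simp add: sum.distrib)
qed

lemma integral_cutoff_grad_le:
  assumes "\<And>s. \<bar>smooth_step' s\<bar> \<le> C"
  shows "integral (cbox a b) (\<lambda>p. \<bar>cutoff_dx F c r p\<bar> + \<bar>cutoff_dy F c r p\<bar>) \<le> 64 * C\<^sup>2 * (\<Sum>i\<in>F. r i)"
proof -
  define g where "g i p = \<bar>bump_dx (c i) (r i) p\<bar> + \<bar>bump_dy (c i) (r i) p\<bar>" for i p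
  have C: "C \<ge> 0"
    using assms[of 0] by linarith
  have integrable: "g i integrable_on cbox a b" if "i \<in> F" for i
    unfolding g_def[abs_def] by (rule integrable_continuous_UNIV[OF continuous_on_bump_grad[OF r_pos[OF that]]])
  have "(\<lambda>p. \<bar>cutoff_dx F c r p\<bar> + \<bar>cutoff_dy F c r p\<bar>) integrable_on cbox a b"
    using continuous_on_cutoff(2,3)
    by (intro integrable_continuous_UNIV continuous_intros)
  moreover have "(\<lambda>p. C * (\<Sum>i\<in>F. g i p)) integrable_on cbox a b"
    by (rule integrable_on_mult_right, rule integrable_sum[OF finite_F], rule integrable)
  ultimately have "integral (cbox a b) (\<lambda>p. \<bar>cutoff_dx F c r p\<bar> + \<bar>cutoff_dy F c r p\<bar>)
      \<le> integral (cbox a b) (\<lambda>p. C * (\<Sum>i\<in>F. g i p))"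
    by (rule integral_le) (unfold g_def, rule cutoff_grad_le[OF assms])
  also have "\<dots> = C * (\<Sum>i\<in>F. integral (cbox a b) (g i))"
    by (simp add: integral_sum[OF finite_F integrable])
  also have "\<dots> \<le> C * (\<Sum>i\<in>F. 64 * C * r i)"
    using integral_bump_grad_le[OF r_pos assms] C unfolding g_def by (intro mult_left_mono sum_mono) auto
  also have "\<dots> = 64 * C\<^sup>2 * (\<Sum>i\<in>F. r i)"
    by (simp add: sum_distrib_left[symmetric] power2_eq_square mult.assoc)
  finally show ?thesis .
qed

end

section \<open>Cutoffs near compact sets of zero length\<close>

lemma hausdorff1_zero_small_cover:
  assumes "hausdorff1 A = 0" "\<eta> > 0"
  obtains C :: "nat \<Rightarrow> (real \<times> real) set" where "A \<subseteq> (\<Union>i. C i)" "\<And>i. bounded (C i)"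
    "summable (\<lambda>i. diameter (C i))" "(\<Sum>i. diameter (C i)) < \<eta>"
proof -
  have "hausdorff_pre1 1 A \<le> hausdorff1 A"
    unfolding hausdorff1_def by (rule SUP_upper) auto
  then have "hausdorff_pre1 1 A < ennreal \<eta>"
    using assms by simp
  then obtain C where C: "A \<subseteq> (\<Union>i. C i)" "\<And>i. bounded (C i)"
      and sum_C: "(\<Sum>i. ennreal (diameter (C i))) < ennreal \<eta>"
    unfolding hausdorff_pre1_def INF_less_iff by blast
  have diam_nonneg: "0 \<le> diameter (C i)" for i
    using C(2) by (rule diameter_ge_0)
  have "(\<Sum>i. ennreal (diameter (C i))) \<noteq> top"
    using order.strict_trans[OF sum_C ennreal_less_top] by (simp add: less_top)
  then have summable: "summable (\<lambda>i. diameter (C i))"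
    by (rule summable_suminf_not_top[OF diam_nonneg])
  have "ennreal (\<Sum>i. diameter (C i)) < ennreal \<eta>"
    using sum_C suminf_ennreal2[OF diam_nonneg summable] by simp
  then have "(\<Sum>i. diameter (C i)) < \<eta>"
    using ennreal_less_iff[OF suminf_nonneg[OF summable diam_nonneg]] by blast
  with C summable show ?thesis
    by (rule that)
qed

lemma hausdorff1_zero_finite_ball_cover:
  assumes "hausdorff1 A = 0" "compact K" "K \<subseteq> A" "\<eta> > 0"
  obtains F :: "nat set" and c r where "finite F" "\<And>i. i \<in> F \<Longrightarrow> r i > 0 \<and> c i \<in> K"
    "K \<subseteq> (\<Union>i\<in>F. ball (c i) (r i))" "(\<Sum>i\<in>F. r i) \<le> \<eta>"
proof -
  obtain C where C: "A \<subseteq> (\<Union>i. C i)" "\<And>i. bounded (C i)"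
    and summable: "summable (\<lambda>i. diameter (C i))" and sum_diam: "(\<Sum>i. diameter (C i)) < \<eta> / 2"
    using hausdorff1_zero_small_cover[OF assms(1), of "\<eta> / 2"] assms(4) by auto
  have diam_nonneg: "0 \<le> diameter (C i)" for i
    using C(2) by (rule diameter_ge_0)
  define I where "I = {i. C i \<inter> K \<noteq> {}}"
  define c where "c i = (SOME x. x \<in> C i \<inter> K)" for i
  \<comment> \<open>Enlarging the radii by a summable amount makes the balls an open cover of \<open>K\<close>.\<close>
  define r where "r i = diameter (C i) + \<eta> / 2 * (1 / 2) ^ Suc i" for i
  have c: "c i \<in> C i \<inter> K" if "i \<in> I" for i
  proof -
    have "C i \<inter> K \<noteq> {}"
      using that by (simp add: I_def)
    then show ?thesis
      unfolding c_def by (rule someI_ex[OF ex_in_conv[THEN iffD2]])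
  qed
  have r_pos: "r i > 0" for i
    using diam_nonneg[of i] assms(4) unfolding r_def by (simp add: add_nonneg_pos)
  have cover: "K \<subseteq> (\<Union>i\<in>I. ball (c i) (r i))"
  proof
    fix x assume x: "x \<in> K"
    then obtain i where i: "x \<in> C i"
      using C(1) assms(3) by blast
    then have "i \<in> I"
      using x by (auto simp: I_def)
    then have "dist (c i) x \<le> diameter (C i)"
      using diameter_bounded_bound[OF C(2)] c i by blast
    also have "\<dots> < r i"
      using assms(4) by (simp add: r_def)
    finally show "x \<in> (\<Union>i\<in>I. ball (c i) (r i))"
      using \<open>i \<in> I\<close> by auto
  qed
  obtain F where F: "F \<subseteq> I" "finite F" "K \<subseteq> (\<Union>i\<in>F. ball (c i) (r i))"
    by (rule compactE_image[OF assms(2) _ cover]) auto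
  have "(\<lambda>i. 1 / 2 * (1 / 2 :: real) ^ i) sums (1 / 2 * 2)"
    using geometric_sums[of "1 / 2 :: real"] by (intro sums_mult) simp
  then have geometric: "(\<lambda>i. (1 / 2 :: real) ^ Suc i) sums 1"
    by simp
  have "(\<Sum>i\<in>F. r i) = (\<Sum>i\<in>F. diameter (C i)) + \<eta> / 2 * (\<Sum>i\<in>F. (1 / 2) ^ Suc i)"
    by (simp add: r_def sum.distrib sum_distrib_left)
  also have "\<dots> \<le> (\<Sum>i. diameter (C i)) + \<eta> / 2 * (\<Sum>i. (1 / 2) ^ Suc i)"
    using assms(4) geometric diam_nonneg
    by (intro add_mono mult_left_mono sum_le_suminf[OF summable F(2)] sum_le_suminf[OF _ F(2)])
      (auto simp: sums_iff)
  also have "\<dots> \<le> \<eta>"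
    using sum_diam geometric by (simp add: sums_iff)
  finally show ?thesis
    using F c r_pos by (intro that[of F r c]) auto
qed

lemma cutoff_near_null_compact:
  assumes "hausdorff1 A = 0" "compact K" "K \<subseteq> A" "compact B" "B \<inter> K = {}" "\<eta> > 0"
  obtains \<psi> \<psi>x \<psi>y V where "open V" "K \<subseteq> V"
    "\<And>p. has_px \<psi> (\<psi>x p) p" "\<And>p. has_py \<psi> (\<psi>y p) p"
    "continuous_on UNIV \<psi>" "continuous_on UNIV \<psi>x" "continuous_on UNIV \<psi>y"
    "\<And>p. 0 \<le> \<psi> p" "\<And>p. p \<in> B \<Longrightarrow> \<psi> p = 1" "\<And>p. p \<in> V \<Longrightarrow> \<psi> p = 0 \<and> \<psi>x p = 0 \<and> \<psi>y p = 0"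
    "\<And>a b. integral (cbox a b) (\<lambda>p. \<bar>\<psi>x p\<bar> + \<bar>\<psi>y p\<bar>) \<le> \<eta>"
proof -
  obtain C where C: "C > 0" "\<And>s. \<bar>smooth_step' s\<bar> \<le> C"
    using smooth_step'_bounded by blast
  obtain d where d: "d > 0" "\<And>x y. x \<in> B \<Longrightarrow> y \<in> K \<Longrightarrow> d \<le> dist x y"
    using separate_compact_closed[OF assms(4) compact_imp_closed[OF assms(2)] assms(5)] by blast
  define \<eta>' where "\<eta>' = min (d / 2) (\<eta> / (64 * C\<^sup>2))"
  have "\<eta>' > 0"
    using d(1) C(1) assms(6) by (simp add: \<eta>'_def)
  then obtain F :: "nat set" and r c where F: "finite F" "\<And>i. i \<in> F \<Longrightarrow> r i > 0 \<and> c i \<in> K"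
      "K \<subseteq> (\<Union>i\<in>F. ball (c i) (r i))" "(\<Sum>i\<in>F. r i) \<le> \<eta>'"
    by (rule hausdorff1_zero_finite_ball_cover[OF assms(1-3)]) blast
  interpret bump_family F c r
    using F(1,2) by unfold_locales blast+
  have one: "cutoff F c r p = 1" if "p \<in> B" for p
  proof (rule cutoff_eq_1)
    fix i assume i: "i \<in> F"
    have "r i \<le> (\<Sum>i\<in>F. r i)"
      using F(1) i r_pos by (intro member_le_sum) (auto intro: less_imp_le)
    moreover have "d \<le> dist p (c i)"
      using d(2)[OF that] F(2)[OF i] by blast
    ultimately show "dist p (c i) \<ge> 2 * r i"
      using F(4) by (simp add: \<eta>'_def)
  qed
  have grad: "integral (cbox a b) (\<lambda>p. \<bar>cutoff_dx F c r p\<bar> + \<bar>cutoff_dy F c r p\<bar>) \<le> \<eta>" for a b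
  proof -
    have "integral (cbox a b) (\<lambda>p. \<bar>cutoff_dx F c r p\<bar> + \<bar>cutoff_dy F c r p\<bar>) \<le> 64 * C\<^sup>2 * \<eta>'"
      using integral_cutoff_grad_le[OF C(2), of a b] mult_left_mono[OF F(4), of "64 * C\<^sup>2"] zero_le_power2[of C]
      by linarith
    also have "\<dots> \<le> 64 * C\<^sup>2 * (\<eta> / (64 * C\<^sup>2))"
      by (intro mult_left_mono) (auto simp: \<eta>'_def)
    also have "\<dots> = \<eta>"
      using C(1) by simp
    finally show ?thesis .
  qed
  show ?thesis
    by (rule that[OF _ F(3) has_px_cutoff has_py_cutoff
          continuous_on_cutoff cutoff_nonneg one cutoff_vanishes grad]) auto
qed

section \<open>The field \<open>N\<close>\<close>

lemma DERIV_div_sqrt_sum_squares: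
  fixes f g :: "real \<Rightarrow> real"
  assumes f: "(f has_real_derivative f') (at x)" and g: "(g has_real_derivative g') (at x)"
    and nz: "(f x)\<^sup>2 + (g x)\<^sup>2 \<noteq> 0"
  shows "((\<lambda>t. f t / sqrt ((f t)\<^sup>2 + (g t)\<^sup>2)) has_real_derivative
     f' / sqrt ((f x)\<^sup>2 + (g x)\<^sup>2) - f x * (f x * f' + g x * g') / sqrt ((f x)\<^sup>2 + (g x)\<^sup>2) ^ 3) (at x)"
proof -
  have pos: "(f x)\<^sup>2 + (g x)\<^sup>2 > 0"
    using nz sum_power2_ge_zero[of "f x" "g x"] by linarith
  define r where "r = sqrt ((f x)\<^sup>2 + (g x)\<^sup>2)"
  have r: "r > 0"
    using pos by (simp add: r_def)
  have "((\<lambda>t. (f t)\<^sup>2 + (g t)\<^sup>2) has_real_derivative 2 * f x * f' + 2 * g x * g') (at x)"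
    using f g by (auto intro!: derivative_eq_intros)
  with DERIV_real_sqrt[OF pos]
  have "((\<lambda>t. sqrt ((f t)\<^sup>2 + (g t)\<^sup>2)) has_real_derivative inverse r / 2 * (2 * f x * f' + 2 * g x * g')) (at x)"
    unfolding r_def by (rule DERIV_chain2)
  from DERIV_divide[OF f this, unfolded r_def[symmetric]]
  have "((\<lambda>t. f t / sqrt ((f t)\<^sup>2 + (g t)\<^sup>2)) has_real_derivative
      (f' * r - f x * (inverse r / 2 * (2 * f x * f' + 2 * g x * g'))) / (r * r)) (at x)"
    using r by simp
  moreover have "(f' * r - f x * (inverse r / 2 * (2 * f x * f' + 2 * g x * g'))) / (r * r)
      = f' / r - f x * (f x * f' + g x * g') / r ^ 3"
    using r by (simp add: field_simps power3_eq_cube)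
  ultimately show ?thesis
    unfolding r_def by simp
qed

definition Vx :: "(real \<times> real \<Rightarrow> real) \<Rightarrow> real \<times> real \<Rightarrow> real" where
  "Vx w p = px w p - snd p"

definition Vy :: "(real \<times> real \<Rightarrow> real) \<Rightarrow> real \<times> real \<Rightarrow> real" where
  "Vy w p = py w p + fst p"

definition Nfield_dx :: "(real \<times> real \<Rightarrow> real) \<Rightarrow> real \<times> real \<Rightarrow> real" where
  "Nfield_dx w p = (let a = Vx w p; b = Vy w p; a' = px (px w) p; b' = px (py w) p + 1;
     r = sqrt (a\<^sup>2 + b\<^sup>2) in a' / r - a * (a * a' + b * b') / r ^ 3)"

definition Nfield_dy :: "(real \<times> real \<Rightarrow> real) \<Rightarrow> real \<times> real \<Rightarrow> real" where
  "Nfield_dy w p = (let a = Vx w p; b = Vy w p; a' = py (px w) p - 1; b' = py (py w) p;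
     r = sqrt (a\<^sup>2 + b\<^sup>2) in b' / r - b * (b * b' + a * a') / r ^ 3)"

lemma Nfield_fst: "fst (Nfield w p) = Vx w p / sqrt ((Vx w p)\<^sup>2 + (Vy w p)\<^sup>2)"
  by (simp add: Nfield_def Vx_def Vy_def Let_def)

lemma Nfield_snd: "snd (Nfield w p) = Vy w p / sqrt ((Vy w p)\<^sup>2 + (Vx w p)\<^sup>2)"
  by (simp add: Nfield_def Vx_def Vy_def Let_def add.commute)

lemma Sing_iff: "p \<in> Sing \<Omega> w \<longleftrightarrow> p \<in> \<Omega> \<and> Vx w p = 0 \<and> Vy w p = 0"
  by (simp add: Sing_def Vx_def Vy_def)

lemma sum_squares_V_pos: "p \<notin> Sing \<Omega> w \<Longrightarrow> p \<in> \<Omega> \<Longrightarrow> (Vx w p)\<^sup>2 + (Vy w p)\<^sup>2 > 0"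
  unfolding Sing_iff by (simp add: sum_power2_gt_zero_iff)

lemma has_px_Nfield_fst:
  assumes "C2_on \<Omega> w" "p \<in> \<Omega> - Sing \<Omega> w"
  shows "has_px (\<lambda>q. fst (Nfield w q)) (Nfield_dx w p) p"
proof -
  obtain x y where p: "p = (x, y)"
    by (cases p)
  have C1: "C1_on \<Omega> (px w)" "C1_on \<Omega> (py w)"
    using assms(1) by (auto simp: C2_on_def)
  have "((\<lambda>t. px w (t, y)) has_real_derivative px (px w) (x, y)) (at x)"
    "((\<lambda>t. py w (t, y)) has_real_derivative px (py w) (x, y)) (at x)"
    using C1_on_has_px[OF C1(1)] C1_on_has_px[OF C1(2)] assms(2) unfolding has_px_def p by auto
  then have "((\<lambda>t. Vx w (t, y)) has_real_derivative px (px w) (x, y)) (at x)"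
    "((\<lambda>t. Vy w (t, y)) has_real_derivative px (py w) (x, y) + 1) (at x)"
    unfolding Vx_def Vy_def by (auto intro!: derivative_eq_intros)
  moreover have "(Vx w (x, y))\<^sup>2 + (Vy w (x, y))\<^sup>2 \<noteq> 0"
    using sum_squares_V_pos[of p \<Omega> w] assms(2) p by auto
  ultimately have "((\<lambda>t. Vx w (t, y) / sqrt ((Vx w (t, y))\<^sup>2 + (Vy w (t, y))\<^sup>2)) has_real_derivative
      Nfield_dx w (x, y)) (at x)"
    unfolding Nfield_dx_def Let_def by (rule DERIV_div_sqrt_sum_squares)
  then show ?thesis
    by (simp add: has_px_def Nfield_fst p)
qed

lemma has_py_Nfield_snd:
  assumes "C2_on \<Omega> w" "p \<in> \<Omega> - Sing \<Omega> w"
  shows "has_py (\<lambda>q. snd (Nfield w q)) (Nfield_dy w p) p"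
proof -
  obtain x y where p: "p = (x, y)"
    by (cases p)
  have C1: "C1_on \<Omega> (px w)" "C1_on \<Omega> (py w)"
    using assms(1) by (auto simp: C2_on_def)
  have "((\<lambda>t. px w (x, t)) has_real_derivative py (px w) (x, y)) (at y)"
    "((\<lambda>t. py w (x, t)) has_real_derivative py (py w) (x, y)) (at y)"
    using C1_on_has_py[OF C1(1)] C1_on_has_py[OF C1(2)] assms(2) unfolding has_py_def p by auto
  then have "((\<lambda>t. Vy w (x, t)) has_real_derivative py (py w) (x, y)) (at y)"
    "((\<lambda>t. Vx w (x, t)) has_real_derivative py (px w) (x, y) - 1) (at y)"
    unfolding Vx_def Vy_def by (auto intro!: derivative_eq_intros)
  moreover have "(Vy w (x, y))\<^sup>2 + (Vx w (x, y))\<^sup>2 \<noteq> 0"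
    using sum_squares_V_pos[of p \<Omega> w] assms(2) p by auto
  ultimately have "((\<lambda>t. Vy w (x, t) / sqrt ((Vy w (x, t))\<^sup>2 + (Vx w (x, t))\<^sup>2)) has_real_derivative
      py (py w) (x, y) / sqrt ((Vy w (x, y))\<^sup>2 + (Vx w (x, y))\<^sup>2)
      - Vy w (x, y) * (Vy w (x, y) * py (py w) (x, y) + Vx w (x, y) * (py (px w) (x, y) - 1))
        / sqrt ((Vy w (x, y))\<^sup>2 + (Vx w (x, y))\<^sup>2) ^ 3) (at y)"
    by (rule DERIV_div_sqrt_sum_squares)
  then show ?thesis
    by (simp add: has_py_def Nfield_snd Nfield_dy_def Let_def add.commute p)
qed

lemma div2_Nfield:
  "C2_on \<Omega> w \<Longrightarrow> p \<in> \<Omega> - Sing \<Omega> w \<Longrightarrow> div2 (Nfield w) p = Nfield_dx w p + Nfield_dy w p"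
  unfolding div2_def
  by (simp add: has_px_imp_px[OF has_px_Nfield_fst] has_py_imp_py[OF has_py_Nfield_snd])

lemma has_px_Vy: "C2_on \<Omega> w \<Longrightarrow> p \<in> \<Omega> \<Longrightarrow> has_px (Vy w) (px (py w) p + 1) p"
  using C1_on_has_px[of \<Omega> "py w" p] unfolding C2_on_def has_px_def Vy_def[abs_def]
  by (auto intro!: derivative_eq_intros)

lemma has_py_Vx: "C2_on \<Omega> w \<Longrightarrow> p \<in> \<Omega> \<Longrightarrow> has_py (Vx w) (py (px w) p - 1) p"
  using C1_on_has_py[of \<Omega> "px w" p] unfolding C2_on_def has_py_def Vx_def[abs_def]
  by (auto intro!: derivative_eq_intros)

lemma continuous_on_V:
  "C2_on \<Omega> w \<Longrightarrow> continuous_on \<Omega> (Vx w)" "C2_on \<Omega> w \<Longrightarrow> continuous_on \<Omega> (Vy w)"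
  unfolding Vx_def[abs_def] Vy_def[abs_def] C2_on_def C1_on_def by (auto intro!: continuous_intros)

lemma continuous_on_Nfield:
  assumes "C2_on \<Omega> w" "S \<subseteq> \<Omega> - Sing \<Omega> w"
  shows "continuous_on S (\<lambda>p. fst (Nfield w p))" "continuous_on S (\<lambda>p. snd (Nfield w p))"
    "continuous_on S (Nfield_dx w)" "continuous_on S (Nfield_dy w)"
proof -
  have c: "continuous_on S (Vx w)" "continuous_on S (Vy w)"
    "continuous_on S (px (px w))" "continuous_on S (px (py w))"
    "continuous_on S (py (px w))" "continuous_on S (py (py w))"
    using continuous_on_V[OF assms(1)] assms(1) continuous_on_subset[of \<Omega> _ S] assms(2)
    unfolding C2_on_def C1_on_def by blast+
  have nz: "\<forall>p\<in>S. sqrt ((Vx w p)\<^sup>2 + (Vy w p)\<^sup>2) \<noteq> 0"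
    using sum_squares_V_pos assms(2) by fastforce
  then have nz': "\<forall>p\<in>S. sqrt ((Vy w p)\<^sup>2 + (Vx w p)\<^sup>2) \<noteq> 0"
    by (simp add: add.commute)
  show "continuous_on S (\<lambda>p. fst (Nfield w p))"
    unfolding Nfield_fst by (intro continuous_intros c) (use nz in auto)
  show "continuous_on S (\<lambda>p. snd (Nfield w p))"
    unfolding Nfield_snd by (intro continuous_intros c) (use nz' in auto)
  show "continuous_on S (Nfield_dx w)"
    unfolding Nfield_dx_def[abs_def] Let_def by (intro continuous_intros c) (use nz in auto)
  show "continuous_on S (Nfield_dy w)"
    unfolding Nfield_dy_def[abs_def] Let_def by (intro continuous_intros c) (use nz in auto)
qed

lemma open_Diff_Sing:
  assumes "open \<Omega>" "C2_on \<Omega> w"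
  shows "open (\<Omega> - Sing \<Omega> w)"
proof -
  have "continuous_on \<Omega> (\<lambda>p. (Vx w p, Vy w p))"
    using continuous_on_V[OF assms(2)] by (intro continuous_intros)
  then have "open (\<Omega> \<inter> (\<lambda>p. (Vx w p, Vy w p)) -` (- {(0, 0)}))"
    using assms(1) by (intro continuous_open_preimage) auto
  moreover have "\<Omega> \<inter> (\<lambda>p. (Vx w p, Vy w p)) -` (- {(0, 0)}) = \<Omega> - Sing \<Omega> w"
    by (auto simp: Sing_iff)
  ultimately show ?thesis
    by simp
qed

lemma abs_div_sqrt_sum_squares_le_1: "\<bar>a / sqrt (a\<^sup>2 + b\<^sup>2)\<bar> \<le> 1"
proof (cases "a = 0")
  case False
  have le: "\<bar>a\<bar> \<le> sqrt (a\<^sup>2 + b\<^sup>2)"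
    using real_sqrt_le_mono[of "a\<^sup>2" "a\<^sup>2 + b\<^sup>2"] by simp
  moreover have "sqrt (a\<^sup>2 + b\<^sup>2) > 0"
    using le False by linarith
  ultimately show ?thesis
    by (simp add: abs_div)
qed simp

lemma abs_Nfield_le_1: "\<bar>fst (Nfield w p)\<bar> \<le> 1" "\<bar>snd (Nfield w p)\<bar> \<le> 1"
  unfolding Nfield_fst Nfield_snd by (rule abs_div_sqrt_sum_squares_le_1)+

lemma inner_diff_normalized:
  fixes a1 a2 b1 b2 :: real
  assumes "a1\<^sup>2 + a2\<^sup>2 > 0" "b1\<^sup>2 + b2\<^sup>2 > 0"
  defines "ra \<equiv> sqrt (a1\<^sup>2 + a2\<^sup>2)" and "rb \<equiv> sqrt (b1\<^sup>2 + b2\<^sup>2)"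
  shows "(a1 - b1) * (a1 / ra - b1 / rb) + (a2 - b2) * (a2 / ra - b2 / rb)
       = (ra + rb) / 2 * ((a1 / ra - b1 / rb)\<^sup>2 + (a2 / ra - b2 / rb)\<^sup>2)"
proof -
  have ra: "ra > 0" "ra\<^sup>2 = a1\<^sup>2 + a2\<^sup>2" and rb: "rb > 0" "rb\<^sup>2 = b1\<^sup>2 + b2\<^sup>2"
    using assms by (auto simp: ra_def rb_def)
  define \<alpha>1 \<alpha>2 \<beta>1 \<beta>2 where "\<alpha>1 = a1 / ra" "\<alpha>2 = a2 / ra" "\<beta>1 = b1 / rb" "\<beta>2 = b2 / rb"
  have a: "a1 = ra * \<alpha>1" "a2 = ra * \<alpha>2" "b1 = rb * \<beta>1" "b2 = rb * \<beta>2"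
    using ra rb by (auto simp: \<alpha>1_\<alpha>2_\<beta>1_\<beta>2_def)
  have unit: "\<alpha>1\<^sup>2 + \<alpha>2\<^sup>2 = 1" "\<beta>1\<^sup>2 + \<beta>2\<^sup>2 = 1"
    using ra rb by (auto simp: \<alpha>1_\<alpha>2_\<beta>1_\<beta>2_def power_divide add_divide_distrib[symmetric])
  have "(ra * \<alpha>1 - rb * \<beta>1) * (\<alpha>1 - \<beta>1) + (ra * \<alpha>2 - rb * \<beta>2) * (\<alpha>2 - \<beta>2)
      = (ra + rb) / 2 * ((\<alpha>1 - \<beta>1)\<^sup>2 + (\<alpha>2 - \<beta>2)\<^sup>2) + (ra - rb) / 2 * ((\<alpha>1\<^sup>2 + \<alpha>2\<^sup>2) - (\<beta>1\<^sup>2 + \<beta>2\<^sup>2))"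
    by (simp add: field_simps power2_eq_square)
  then show ?thesis
    using unit unfolding \<alpha>1_\<alpha>2_\<beta>1_\<beta>2_def[symmetric] by (simp add: a[symmetric])
qed

lemma Nfield_monotone:
  assumes "p \<in> \<Omega> - Sing \<Omega> u" "p \<in> \<Omega> - Sing \<Omega> v"
  defines "Q \<equiv> (px u p - px v p) * (fst (Nfield u p) - fst (Nfield v p))
      + (py u p - py v p) * (snd (Nfield u p) - snd (Nfield v p))"
  shows "Q \<ge> 0" and "Nfield u p \<noteq> Nfield v p \<Longrightarrow> Q > 0"
proof -
  have pos: "(Vx u p)\<^sup>2 + (Vy u p)\<^sup>2 > 0" "(Vx v p)\<^sup>2 + (Vy v p)\<^sup>2 > 0"
    using sum_squares_V_pos assms(1,2) by blast+
  define ra rb where "ra = sqrt ((Vx u p)\<^sup>2 + (Vy u p)\<^sup>2)" "rb = sqrt ((Vx v p)\<^sup>2 + (Vy v p)\<^sup>2)"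
  have r: "ra > 0" "rb > 0"
    using pos by (auto simp: ra_rb_def)
  have N: "fst (Nfield u p) = Vx u p / ra" "snd (Nfield u p) = Vy u p / ra"
    "fst (Nfield v p) = Vx v p / rb" "snd (Nfield v p) = Vy v p / rb"
    by (simp_all add: Nfield_fst Nfield_snd ra_rb_def add.commute)
  have Q_eq: "Q = (ra + rb) / 2 * ((Vx u p / ra - Vx v p / rb)\<^sup>2 + (Vy u p / ra - Vy v p / rb)\<^sup>2)"
    unfolding Q_def N ra_rb_def using inner_diff_normalized[OF pos] by (simp add: Vx_def Vy_def)
  show "Q \<ge> 0"
    using r unfolding Q_eq by (intro mult_nonneg_nonneg) auto
  assume "Nfield u p \<noteq> Nfield v p"
  then have "Vx u p / ra - Vx v p / rb \<noteq> 0 \<or> Vy u p / ra - Vy v p / rb \<noteq> 0"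
    using N by (metis prod.expand eq_iff_diff_eq_0)
  then have "(Vx u p / ra - Vx v p / rb)\<^sup>2 + (Vy u p / ra - Vy v p / rb)\<^sup>2 > 0"
    by (simp add: sum_power2_gt_zero_iff)
  then show "Q > 0"
    using r unfolding Q_eq by (intro mult_pos_pos) auto
qed

lemma Nfield_eq_imp_parallel:
  assumes "p \<in> \<Omega> - Sing \<Omega> u" "p \<in> \<Omega> - Sing \<Omega> v" "Nfield u p = Nfield v p"
  shows "Vx u p * Vy v p - Vx v p * Vy u p = 0"
proof -
  define ra rb where "ra = sqrt ((Vx u p)\<^sup>2 + (Vy u p)\<^sup>2)" "rb = sqrt ((Vx v p)\<^sup>2 + (Vy v p)\<^sup>2)"
  have r: "ra > 0" "rb > 0"
    using sum_squares_V_pos[of p \<Omega> u] sum_squares_V_pos[of p \<Omega> v] assms(1,2) by (auto simp: ra_rb_def)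
  have "Vx u p / ra = Vx v p / rb" "Vy u p / ra = Vy v p / rb"
    using assms(3) unfolding prod_eq_iff Nfield_fst Nfield_snd ra_rb_def by (simp_all add: add.commute)
  then have eq: "rb * Vx u p = ra * Vx v p" "rb * Vy u p = ra * Vy v p"
    using r by (simp_all add: field_simps)
  have "rb * (Vx u p * Vy v p - Vx v p * Vy u p) = (rb * Vx u p) * Vy v p - Vx v p * (rb * Vy u p)"
    by (simp add: algebra_simps)
  also have "\<dots> = 0"
    unfolding eq by simp
  finally show ?thesis
    using r by simp
qed

section \<open>The comparison argument\<close>

locale comparison_setting =
  fixes \<Omega> :: "(real \<times> real) set" and u v :: "real \<times> real \<Rightarrow> real" and \<epsilon> :: real
  assumes open_\<Omega>: "open \<Omega>" and bounded_\<Omega>: "bounded \<Omega>"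
    and C2_u: "C2_on \<Omega> u" and C2_v: "C2_on \<Omega> v"
    and continuous_u: "continuous_on (closure \<Omega>) u" and continuous_v: "continuous_on (closure \<Omega>) v"
    and boundary_le: "\<And>p. p \<in> frontier \<Omega> \<Longrightarrow> u p \<le> v p"
    and \<epsilon>_pos: "\<epsilon> > 0"
begin

definition excess_set :: "(real \<times> real) set" where
  "excess_set = {p \<in> closure \<Omega>. u p - v p \<ge> \<epsilon>}"

definition excess :: "real \<times> real \<Rightarrow> real" where
  "excess p = pos_sq (u p - v p - \<epsilon>)"

definition excess' :: "real \<times> real \<Rightarrow> real" where
  "excess' p = 2 * max (u p - v p - \<epsilon>) 0"

lemma excess_set_subset: "excess_set \<subseteq> \<Omega>"
proof
  fix p assume p: "p \<in> excess_set"
  show "p \<in> \<Omega>"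
  proof (rule ccontr)
    assume "p \<notin> \<Omega>"
    then have "p \<in> frontier \<Omega>"
      using p open_\<Omega> by (auto simp: excess_set_def frontier_def interior_open)
    then show False
      using boundary_le p \<epsilon>_pos by (fastforce simp: excess_set_def)
  qed
qed

lemma compact_excess_set: "compact excess_set"
proof -
  have "continuous_on (closure \<Omega>) (\<lambda>p. u p - v p)"
    using continuous_u continuous_v by (intro continuous_intros)
  then have "closed (closure \<Omega> \<inter> (\<lambda>p. u p - v p) -` {\<epsilon>..})"
    by (rule continuous_closed_preimage) auto
  moreover have "closure \<Omega> \<inter> (\<lambda>p. u p - v p) -` {\<epsilon>..} = excess_set"
    by (auto simp: excess_set_def)
  moreover have "bounded excess_set"
    using bounded_closure[OF bounded_\<Omega>] by (rule bounded_subset) (auto simp: excess_set_def)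
  ultimately show ?thesis
    by (simp add: compact_eq_bounded_closed)
qed

lemma excess_eq_0: "p \<in> \<Omega> \<Longrightarrow> p \<notin> excess_set \<Longrightarrow> excess p = 0 \<and> excess' p = 0"
  using closure_subset by (auto simp: excess_set_def excess_def excess'_def pos_sq_eq_0)

lemma excess_nonneg: "0 \<le> excess p"
  by (simp add: excess_def pos_sq_nonneg)

lemma excess_bounded: obtains M where "M \<ge> 0" "\<And>p. p \<in> \<Omega> \<Longrightarrow> excess p \<le> M"
proof -
  have "continuous_on (closure \<Omega>) excess"
    unfolding excess_def[abs_def] using continuous_u continuous_v by (intro continuous_intros)
  then have "compact (excess ` closure \<Omega>)"
    using bounded_\<Omega> by (intro compact_continuous_image) (auto simp: compact_eq_bounded_closed)
  then obtain B where "\<forall>x\<in>excess ` closure \<Omega>. norm x \<le> B"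
    using compact_imp_bounded bounded_iff by blast
  then show ?thesis
    using closure_subset by (intro that[of "max B 0"]) force+
qed

lemma has_px_excess: "p \<in> \<Omega> \<Longrightarrow> has_px excess (excess' p * (px u p - px v p)) p"
  using C1_on_has_px[of \<Omega> u p] C1_on_has_px[of \<Omega> v p] C2_u C2_v
  unfolding C2_on_def has_px_def excess_def[abs_def] excess'_def
  by (auto intro!: derivative_eq_intros)

lemma has_py_excess: "p \<in> \<Omega> \<Longrightarrow> has_py excess (excess' p * (py u p - py v p)) p"
  using C1_on_has_py[of \<Omega> u p] C1_on_has_py[of \<Omega> v p] C2_u C2_v
  unfolding C2_on_def has_py_def excess_def[abs_def] excess'_def
  by (auto intro!: derivative_eq_intros)

lemma continuous_on_excess: "continuous_on \<Omega> excess" "continuous_on \<Omega> excess'"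
  using C2_u C2_v unfolding excess_def[abs_def] excess'_def[abs_def] C2_on_def C1_on_def
  by (auto intro!: continuous_intros)

lemma closure_subset_square_box:
  obtains a1 a2 where "closure \<Omega> \<subseteq> box (- a1, - a2) (a1, a2)"
proof -
  obtain a where "closure \<Omega> \<subseteq> box (- a) a"
    using bounded_subset_box_symmetric[OF bounded_closure[OF bounded_\<Omega>]] by blast
  then show ?thesis
    by (intro that[of "fst a" "snd a"]) (cases a, simp)
qed

text \<open>The divergence of the field \<open>excess \<cdot> (Vy u, - Vx u)\<close>.\<close>

definition rotated_div :: "real \<times> real \<Rightarrow> real" where
  "rotated_div q = excess' q * ((px u q - px v q) * Vy u q - (py u q - py v q) * Vx u q)
     + excess q * (px (py u) q - py (px u) q + 2)"

lemma rotated_div_integral_eq_0: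
  assumes "closure \<Omega> \<subseteq> box (a1, a2) (b1, b2)"
  defines "D \<equiv> \<lambda>q. if q \<in> \<Omega> then rotated_div q else 0"
  shows "continuous_on UNIV D" "(D has_integral 0) (cbox (a1, a2) (b1, b2))"
proof -
  define F1x where "F1x q = excess' q * (px u q - px v q) * Vy u q + excess q * (px (py u) q + 1)" for q
  define F2y where "F2y q = - (excess' q * (py u q - py v q) * Vx u q + excess q * (py (px u) q - 1))" for q
  have F1: "has_px (\<lambda>q. excess q * Vy u q) (F1x q) q" if "q \<in> \<Omega>" for q
    using has_px_mult[OF has_px_excess[OF that] has_px_Vy[OF C2_u that]] by (simp add: F1x_def)
  have F2: "has_py (\<lambda>q. - (excess q * Vx u q)) (F2y q) q" if "q \<in> \<Omega>" for q
    using DERIV_minus[OF has_py_mult[OF has_py_excess[OF that] has_py_Vx[OF C2_u that], unfolded has_py_def]]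
    unfolding F2y_def has_py_def by simp
  have cont: "continuous_on \<Omega> F1x" "continuous_on \<Omega> F2y"
    using continuous_on_excess continuous_on_V[OF C2_u] C2_u C2_v
    unfolding F1x_def[abs_def] F2y_def[abs_def] C2_on_def C1_on_def by (auto intro!: continuous_intros)
  have vanish: "q \<in> \<Omega> - excess_set \<Longrightarrow> excess q * Vy u q = 0 \<and> - (excess q * Vx u q) = 0" for q
    using excess_eq_0 by simp
  have "excess_set \<subseteq> box (a1, a2) (b1, b2)"
    using assms(1) excess_set_subset closure_subset by auto
  note div = divergence_integral_eq_0[OF open_\<Omega> compact_imp_closed[OF compact_excess_set] excess_set_subset
      this F1 F2 cont vanish]
  have "D = (\<lambda>q. if q \<in> \<Omega> then F1x q + F2y q else 0)"
    unfolding D_def by (intro ext) (simp add: F1x_def F2y_def rotated_div_def algebra_simps)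
  with div show "continuous_on UNIV D" "(D has_integral 0) (cbox (a1, a2) (b1, b2))"
    by simp_all
qed

text \<open>If \<open>N(u)\<close> and \<open>N(v)\<close> are parallel where \<open>u - v > \<epsilon>\<close>, then \<open>rotated_div = 2 \<cdot> excess\<close>:
  the gradient term is a cross product of parallel vectors and the mixed partials cancel by
  Schwarz's theorem.\<close>

lemma excess_le_if_parallel:
  assumes parallel: "\<And>p. p \<in> \<Omega> \<Longrightarrow> u p - v p > \<epsilon> \<Longrightarrow> Vx u p * Vy v p - Vx v p * Vy u p = 0"
    and "p \<in> \<Omega>"
  shows "u p - v p \<le> \<epsilon>"
proof -
  obtain a1 a2 where box: "closure \<Omega> \<subseteq> box (- a1, - a2) (a1, a2)"
    by (rule closure_subset_square_box)
  define D where "D q = (if q \<in> \<Omega> then rotated_div q else 0)" for q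
  note D = rotated_div_integral_eq_0[OF box, folded D_def]
  have "rotated_div q = 2 * excess q" if "q \<in> \<Omega>" for q
  proof -
    have "excess' q * ((px u q - px v q) * Vy u q - (py u q - py v q) * Vx u q) = 0"
      using parallel[OF that] by (cases "u q - v q > \<epsilon>") (auto simp: excess'_def Vx_def Vy_def algebra_simps)
    then show ?thesis
      using px_py_commute[OF open_\<Omega> C2_u that] by (simp add: rotated_div_def)
  qed
  then have D_eq: "D q = (if q \<in> \<Omega> then 2 * excess q else 0)" for q
    by (simp add: D_def)
  have "D p = 0"
  proof (rule has_integral_0_cbox_imp_0[OF continuous_on_subset[OF D(1) subset_UNIV] _ D(2)])
    show "0 \<le> D q" for q
      by (simp add: D_eq excess_nonneg)
    show "box (- a1, - a2) (a1, a2) \<noteq> {}" "p \<in> cbox (- a1, - a2) (a1, a2)"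
      using box closure_subset \<open>p \<in> \<Omega>\<close> box_subset_cbox by blast+
  qed
  then have "excess p = 0"
    using \<open>p \<in> \<Omega>\<close> by (simp add: D_eq)
  then show ?thesis
    by (auto simp: excess_def pos_sq_def)
qed

abbreviation singular :: "(real \<times> real) set" where
  "singular \<equiv> Sing \<Omega> u \<union> Sing \<Omega> v"

definition excess_flux :: "real \<times> real \<Rightarrow> real" where
  "excess_flux p = excess' p * ((px u p - px v p) * (fst (Nfield u p) - fst (Nfield v p))
     + (py u p - py v p) * (snd (Nfield u p) - snd (Nfield v p)))"

lemma open_nonsingular: "open (\<Omega> - singular)"
proof -
  have "\<Omega> - singular = (\<Omega> - Sing \<Omega> u) \<inter> (\<Omega> - Sing \<Omega> v)"
    by auto
  then show ?thesis
    using open_Diff_Sing[OF open_\<Omega> C2_u] open_Diff_Sing[OF open_\<Omega> C2_v] by auto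
qed

lemma excess_flux_nonneg: "p \<in> \<Omega> - singular \<Longrightarrow> 0 \<le> excess_flux p"
  using Nfield_monotone(1)[of p \<Omega> u v] by (simp add: excess_flux_def excess'_def)

lemma continuous_on_excess_flux: "continuous_on (\<Omega> - singular) excess_flux"
proof -
  have sub: "\<Omega> - singular \<subseteq> \<Omega>" "\<Omega> - singular \<subseteq> \<Omega> - Sing \<Omega> u" "\<Omega> - singular \<subseteq> \<Omega> - Sing \<Omega> v"
    by auto
  have c: "continuous_on (\<Omega> - singular) excess'"
    "continuous_on (\<Omega> - singular) (px u)" "continuous_on (\<Omega> - singular) (py u)"
    "continuous_on (\<Omega> - singular) (px v)" "continuous_on (\<Omega> - singular) (py v)"
    using C2_u C2_v continuous_on_subset[OF continuous_on_excess(2) sub(1)] sub(1)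
    unfolding C2_on_def C1_on_def by (auto intro: continuous_on_subset)
  note N = continuous_on_Nfield[OF C2_u sub(2)] continuous_on_Nfield[OF C2_v sub(3)]
  show ?thesis
    unfolding excess_flux_def[abs_def] by (intro continuous_on_mult continuous_on_add continuous_on_diff c N)
qed

lemma compact_singular_excess_set: "compact (singular \<inter> excess_set)"
proof -
  have closed: "closed {p \<in> excess_set. (Vx w p, Vy w p) = (0, 0)}" if "C2_on \<Omega> w" for w
  proof (rule continuous_closed_preimage_constant)
    show "continuous_on excess_set (\<lambda>p. (Vx w p, Vy w p))"
      using continuous_on_V[OF that] excess_set_subset
      by (intro continuous_intros) (auto intro: continuous_on_subset)
  qed (rule compact_imp_closed[OF compact_excess_set])
  have "singular \<inter> excess_set
      = excess_set \<inter> ({p \<in> excess_set. (Vx u p, Vy u p) = (0, 0)} \<union> {p \<in> excess_set. (Vx v p, Vy v p) = (0, 0)})"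
    using excess_set_subset by (auto simp: Sing_iff)
  then show ?thesis
    using compact_Int_closed[OF compact_excess_set closed_Un[OF closed[OF C2_u] closed[OF C2_v]]] by simp
qed

text \<open>The divergence of \<open>\<psi> \<cdot> excess \<cdot> (N(u) - N(v))\<close>, where \<open>\<psi>x\<close> and \<open>\<psi>y\<close> are the
  partial derivatives of \<open>\<psi>\<close>.\<close>

definition cutoff_div ::
    "(real \<times> real \<Rightarrow> real) \<Rightarrow> (real \<times> real \<Rightarrow> real) \<Rightarrow> (real \<times> real \<Rightarrow> real) \<Rightarrow> real \<times> real \<Rightarrow> real" where
  "cutoff_div \<psi> \<psi>x \<psi>y q =
     (\<psi>x q * excess q + \<psi> q * (excess' q * (px u q - px v q))) * (fst (Nfield u q) - fst (Nfield v q))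
     + \<psi> q * excess q * (Nfield_dx u q - Nfield_dx v q)
     + ((\<psi>y q * excess q + \<psi> q * (excess' q * (py u q - py v q))) * (snd (Nfield u q) - snd (Nfield v q))
     + \<psi> q * excess q * (Nfield_dy u q - Nfield_dy v q))"

lemma cutoff_div_integral_eq_0:
  assumes \<psi>: "\<And>p. has_px \<psi> (\<psi>x p) p" "\<And>p. has_py \<psi> (\<psi>y p) p" "continuous_on UNIV \<psi>"
      "continuous_on UNIV \<psi>x" "continuous_on UNIV \<psi>y"
    and V: "open V" "singular \<inter> excess_set \<subseteq> V" "\<And>p. p \<in> V \<Longrightarrow> \<psi> p = 0 \<and> \<psi>x p = 0 \<and> \<psi>y p = 0"
    and box: "closure \<Omega> \<subseteq> box (a1, a2) (b1, b2)"
  defines "D \<equiv> \<lambda>q. if q \<in> \<Omega> - singular then cutoff_div \<psi> \<psi>x \<psi>y q else 0"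
  shows "continuous_on UNIV D" "(D has_integral 0) (cbox (a1, a2) (b1, b2))"
proof -
  let ?U = "\<Omega> - singular" and ?Z = "excess_set - V"
  define G1 where "G1 p = fst (Nfield u p) - fst (Nfield v p)" for p
  define G2 where "G2 p = snd (Nfield u p) - snd (Nfield v p)" for p
  have sub: "?U \<subseteq> \<Omega>" "?U \<subseteq> \<Omega> - Sing \<Omega> u" "?U \<subseteq> \<Omega> - Sing \<Omega> v"
    by auto
  have Z: "closed ?Z" "?Z \<subseteq> ?U" "?Z \<subseteq> box (a1, a2) (b1, b2)"
    using closed_Diff[OF compact_imp_closed[OF compact_excess_set] V(1)] V(2) excess_set_subset
      closure_subset[of \<Omega>] box by auto
  have F1: "has_px (\<lambda>q. \<psi> q * excess q * G1 q)
      ((\<psi>x p * excess p + \<psi> p * (excess' p * (px u p - px v p))) * G1 p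
        + \<psi> p * excess p * (Nfield_dx u p - Nfield_dx v p)) p" if "p \<in> ?U" for p
    unfolding G1_def using that sub
    by (intro has_px_mult has_px_diff \<psi>(1) has_px_excess has_px_Nfield_fst[OF C2_u] has_px_Nfield_fst[OF C2_v]) auto
  have F2: "has_py (\<lambda>q. \<psi> q * excess q * G2 q)
      ((\<psi>y p * excess p + \<psi> p * (excess' p * (py u p - py v p))) * G2 p
        + \<psi> p * excess p * (Nfield_dy u p - Nfield_dy v p)) p" if "p \<in> ?U" for p
    unfolding G2_def using that sub
    by (intro has_py_mult has_py_diff \<psi>(2) has_py_excess has_py_Nfield_snd[OF C2_u] has_py_Nfield_snd[OF C2_v]) auto
  have cont_\<Omega>: "continuous_on ?U excess" "continuous_on ?U excess'" "continuous_on ?U (px u)"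
    "continuous_on ?U (py u)" "continuous_on ?U (px v)" "continuous_on ?U (py v)"
    using continuous_on_excess C2_u C2_v continuous_on_subset[of \<Omega> _ ?U] sub(1)
    unfolding C2_on_def C1_on_def by blast+
  note cont_N = continuous_on_Nfield[OF C2_u sub(2)] continuous_on_Nfield[OF C2_v sub(3)]
  have cont_\<psi>: "continuous_on ?U \<psi>" "continuous_on ?U \<psi>x" "continuous_on ?U \<psi>y"
    using \<psi>(3-5) by (auto intro: continuous_on_subset)
  have cont_G: "continuous_on ?U G1" "continuous_on ?U G2"
    unfolding G1_def[abs_def] G2_def[abs_def] by (intro continuous_on_diff cont_N)+
  have off_Z: "\<psi> p * excess p * G1 p = 0 \<and> \<psi> p * excess p * G2 p = 0" if "p \<in> ?U - ?Z" for p
    using that V(3)[of p] excess_eq_0[of p] by auto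
  note div = divergence_integral_eq_0[OF open_nonsingular Z F1 F2 _ _ off_Z]
  have "D = (\<lambda>p. if p \<in> ?U then
      ((\<psi>x p * excess p + \<psi> p * (excess' p * (px u p - px v p))) * G1 p
        + \<psi> p * excess p * (Nfield_dx u p - Nfield_dx v p))
      + ((\<psi>y p * excess p + \<psi> p * (excess' p * (py u p - py v p))) * G2 p
        + \<psi> p * excess p * (Nfield_dy u p - Nfield_dy v p)) else 0)"
    unfolding D_def cutoff_div_def G1_def G2_def by simp
  with div show "continuous_on UNIV D" "(D has_integral 0) (cbox (a1, a2) (b1, b2))"
    by (simp_all add: continuous_on_add continuous_on_mult continuous_on_diff cont_\<Omega> cont_N cont_\<psi> cont_G)
qed

text \<open>Where \<open>div N(u) \<ge> div N(v)\<close>, the divergence of \<open>\<psi> \<cdot> excess \<cdot> (N(u) - N(v))\<close> dominates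
  \<open>\<psi> \<cdot> excess_flux\<close> up to the terms where the gradient falls on \<open>\<psi>\<close>, which \<open>|N| \<le> 1\<close> controls.\<close>

lemma cutoff_div_lower_bound:
  assumes "p \<in> \<Omega> - singular" "div2 (Nfield v) p \<le> div2 (Nfield u) p"
    and "0 \<le> \<psi> p" "excess p \<le> M"
  shows "\<psi> p * excess_flux p \<le> cutoff_div \<psi> \<psi>x \<psi>y p + 2 * M * (\<bar>\<psi>x p\<bar> + \<bar>\<psi>y p\<bar>)"
proof -
  define G1 where "G1 = fst (Nfield u p) - fst (Nfield v p)"
  define G2 where "G2 = snd (Nfield u p) - snd (Nfield v p)"
  define A where "A = excess p * (\<psi>x p * G1 + \<psi>y p * G2)"
  define B where "B = \<psi> p * excess p * ((Nfield_dx u p - Nfield_dx v p) + (Nfield_dy u p - Nfield_dy v p))"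
  have "p \<in> \<Omega> - Sing \<Omega> u" "p \<in> \<Omega> - Sing \<Omega> v"
    using assms(1) by auto
  then have "0 \<le> (Nfield_dx u p + Nfield_dy u p) - (Nfield_dx v p + Nfield_dy v p)"
    using assms(2) div2_Nfield[OF C2_u] div2_Nfield[OF C2_v] by simp
  then have "0 \<le> B"
    unfolding B_def using assms(3) excess_nonneg by simp
  have G: "\<bar>G1\<bar> \<le> 2" "\<bar>G2\<bar> \<le> 2"
    unfolding G1_def G2_def using abs_Nfield_le_1[of u p] abs_Nfield_le_1[of v p] by linarith+
  have "\<bar>\<psi>x p * G1 + \<psi>y p * G2\<bar> \<le> \<bar>\<psi>x p\<bar> * \<bar>G1\<bar> + \<bar>\<psi>y p\<bar> * \<bar>G2\<bar>"
    using abs_triangle_ineq[of "\<psi>x p * G1" "\<psi>y p * G2"] unfolding abs_mult .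
  also have "\<dots> \<le> \<bar>\<psi>x p\<bar> * 2 + \<bar>\<psi>y p\<bar> * 2"
    using G by (intro add_mono mult_left_mono) auto
  also have "\<dots> = 2 * (\<bar>\<psi>x p\<bar> + \<bar>\<psi>y p\<bar>)"
    by simp
  finally have "\<bar>excess p\<bar> * \<bar>\<psi>x p * G1 + \<psi>y p * G2\<bar> \<le> M * (2 * (\<bar>\<psi>x p\<bar> + \<bar>\<psi>y p\<bar>))"
    using assms(4) excess_nonneg[of p] by (intro mult_mono) auto
  then have "\<bar>A\<bar> \<le> 2 * M * (\<bar>\<psi>x p\<bar> + \<bar>\<psi>y p\<bar>)"
    unfolding A_def abs_mult by (simp add: algebra_simps)
  moreover have "cutoff_div \<psi> \<psi>x \<psi>y p = \<psi> p * excess_flux p + A + B"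
    by (simp add: cutoff_div_def excess_flux_def A_def B_def G1_def G2_def algebra_simps)
  ultimately show ?thesis
    using \<open>0 \<le> B\<close> abs_le_D2[of A] by linarith
qed

lemma integral_cutoff_excess_flux_le:
  assumes div: "\<And>p. p \<in> \<Omega> - singular \<Longrightarrow> div2 (Nfield v) p \<le> div2 (Nfield u) p"
    and \<psi>: "\<And>p. has_px \<psi> (\<psi>x p) p" "\<And>p. has_py \<psi> (\<psi>y p) p" "continuous_on UNIV \<psi>"
      "continuous_on UNIV \<psi>x" "continuous_on UNIV \<psi>y" "\<And>p. 0 \<le> \<psi> p"
    and V: "open V" "singular \<inter> excess_set \<subseteq> V" "\<And>p. p \<in> V \<Longrightarrow> \<psi> p = 0 \<and> \<psi>x p = 0 \<and> \<psi>y p = 0"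
    and M: "0 \<le> M" "\<And>p. p \<in> \<Omega> \<Longrightarrow> excess p \<le> M"
    and box: "closure \<Omega> \<subseteq> box (a1, a2) (b1, b2)"
  defines "f \<equiv> \<lambda>p. if p \<in> \<Omega> - singular then \<psi> p * excess_flux p else 0"
  shows "continuous_on UNIV f"
    and "integral (cbox (a1, a2) (b1, b2)) f \<le> 2 * M * integral (cbox (a1, a2) (b1, b2)) (\<lambda>p. \<bar>\<psi>x p\<bar> + \<bar>\<psi>y p\<bar>)"
proof -
  let ?U = "\<Omega> - singular" and ?R = "cbox (a1, a2) (b1, b2)"
  define D where "D q = (if q \<in> ?U then cutoff_div \<psi> \<psi>x \<psi>y q else 0)" for q
  note D = cutoff_div_integral_eq_0[OF \<psi>(1-5) V box, folded D_def]
  show cont_f: "continuous_on UNIV f"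
    unfolding f_def using open_nonsingular closed_Diff[OF compact_imp_closed[OF compact_excess_set] V(1)]
  proof (rule continuous_on_zero_extension)
    show "excess_set - V \<subseteq> ?U"
      using V(2) excess_set_subset by blast
    show "continuous_on ?U (\<lambda>p. \<psi> p * excess_flux p)"
      using \<psi>(3) continuous_on_excess_flux by (blast intro: continuous_on_mult continuous_on_subset)
    show "\<psi> p * excess_flux p = 0" if "p \<in> ?U - (excess_set - V)" for p
      using that V(3)[of p] excess_eq_0[of p] by (auto simp: excess_flux_def)
  qed
  have f_le: "f p \<le> D p + 2 * M * (\<bar>\<psi>x p\<bar> + \<bar>\<psi>y p\<bar>)" for p
  proof (cases "p \<in> ?U")
    case True
    then show ?thesis
      using cutoff_div_lower_bound[OF True div[OF True] \<psi>(6) M(2)] by (simp add: f_def D_def)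
  next
    case False
    then show ?thesis
      using M(1) unfolding f_def D_def if_not_P[OF False] by simp
  qed
  have g_int: "(\<lambda>p. \<bar>\<psi>x p\<bar> + \<bar>\<psi>y p\<bar>) integrable_on ?R"
    using \<psi>(4,5) by (intro integrable_continuous_UNIV continuous_intros)
  have "integral ?R f \<le> integral ?R (\<lambda>p. D p + 2 * M * (\<bar>\<psi>x p\<bar> + \<bar>\<psi>y p\<bar>))"
    using \<psi>(4,5) D(1) cont_f f_le
    by (intro integral_le integrable_continuous_UNIV continuous_intros) auto
  also have "\<dots> = integral ?R D + 2 * M * integral ?R (\<lambda>p. \<bar>\<psi>x p\<bar> + \<bar>\<psi>y p\<bar>)"
    using integral_add[OF has_integral_integrable[OF D(2)] integrable_on_mult_right[OF g_int]]
      integral_mult[OF g_int, of "2 * M"] by simp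
  also have "\<dots> = 2 * M * integral ?R (\<lambda>p. \<bar>\<psi>x p\<bar> + \<bar>\<psi>y p\<bar>)"
    using integral_unique[OF D(2)] by simp
  finally show "integral ?R f \<le> 2 * M * integral ?R (\<lambda>p. \<bar>\<psi>x p\<bar> + \<bar>\<psi>y p\<bar>)" .
qed

lemma integral_excess_flux_cbox_le:
  assumes div: "\<And>p. p \<in> \<Omega> - singular \<Longrightarrow> div2 (Nfield v) p \<le> div2 (Nfield u) p"
    and null: "hausdorff1 (closure singular) = 0"
    and B: "cbox c d \<subseteq> \<Omega> - singular" and "\<eta> > 0"
  shows "integral (cbox c d) excess_flux \<le> \<eta>"
proof -
  obtain M where M: "M \<ge> 0" "\<And>p. p \<in> \<Omega> \<Longrightarrow> excess p \<le> M"
    using excess_bounded by blast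
  define \<eta>' where "\<eta>' = \<eta> / (2 * M + 1)"
  have "\<eta>' > 0"
    using \<open>\<eta> > 0\<close> M(1) by (simp add: \<eta>'_def)
  have "singular \<inter> excess_set \<subseteq> closure singular"
    using closure_subset by blast
  moreover have "cbox c d \<inter> (singular \<inter> excess_set) = {}"
    using B by blast
  ultimately obtain \<psi> \<psi>x \<psi>y V where V: "open V" "singular \<inter> excess_set \<subseteq> V"
    and \<psi>: "\<And>p. has_px \<psi> (\<psi>x p) p" "\<And>p. has_py \<psi> (\<psi>y p) p"
      "continuous_on UNIV \<psi>" "continuous_on UNIV \<psi>x" "continuous_on UNIV \<psi>y" "\<And>p. 0 \<le> \<psi> p"
    and \<psi>_B: "\<And>p. p \<in> cbox c d \<Longrightarrow> \<psi> p = 1"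
    and V_vanish: "\<And>p. p \<in> V \<Longrightarrow> \<psi> p = 0 \<and> \<psi>x p = 0 \<and> \<psi>y p = 0"
    and \<psi>_grad: "\<And>a b. integral (cbox a b) (\<lambda>p. \<bar>\<psi>x p\<bar> + \<bar>\<psi>y p\<bar>) \<le> \<eta>'"
    by (rule cutoff_near_null_compact[OF null compact_singular_excess_set _ compact_cbox _ \<open>\<eta>' > 0\<close>]) blast+
  obtain a1 a2 where box: "closure \<Omega> \<subseteq> box (- a1, - a2) (a1, a2)"
    by (rule closure_subset_square_box)
  let ?R = "cbox (- a1, - a2) (a1, a2)"
  define f where "f p = (if p \<in> \<Omega> - singular then \<psi> p * excess_flux p else 0)" for p
  note estimate = integral_cutoff_excess_flux_le[OF div \<psi> V V_vanish M box, folded f_def]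
  have "cbox c d \<subseteq> ?R"
    using B box closure_subset box_subset_cbox by blast
  have "integral (cbox c d) excess_flux = integral (cbox c d) f"
    using B \<psi>_B by (intro integral_cong) (auto simp: f_def)
  also have "\<dots> \<le> integral ?R f"
    using \<open>cbox c d \<subseteq> ?R\<close> \<psi>(6) excess_flux_nonneg estimate(1)
    by (intro integral_subset_le integrable_continuous_UNIV) (auto simp: f_def)
  also have "\<dots> \<le> 2 * M * \<eta>'"
    using estimate(2) mult_left_mono[OF \<psi>_grad[of "(- a1, - a2)" "(a1, a2)"], of "2 * M"] M(1) by linarith
  also have "\<dots> \<le> \<eta>"
    using M(1) \<open>\<eta> > 0\<close> by (simp add: \<eta>'_def field_simps)
  finally show ?thesis .
qed

text \<open>\<open>excess_flux\<close> is nonnegative and continuous off the singular set, so it vanishes there;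
  by the strict monotonicity of \<open>a \<mapsto> a / |a|\<close> this forces \<open>N(u) = N(v)\<close> where \<open>excess' > 0\<close>.\<close>

lemma Nfield_eq_where_excess:
  assumes div: "\<And>p. p \<in> \<Omega> - singular \<Longrightarrow> div2 (Nfield v) p \<le> div2 (Nfield u) p"
    and null: "hausdorff1 (closure singular) = 0"
    and q: "q \<in> \<Omega> - singular" "u q - v q > \<epsilon>"
  shows "Nfield u q = Nfield v q"
proof (rule ccontr)
  assume "Nfield u q \<noteq> Nfield v q"
  then have "excess_flux q > 0"
    using Nfield_monotone(2)[of q \<Omega> u v] q by (simp add: excess_flux_def excess'_def)
  then obtain c d where B: "q \<in> box c d" "cbox c d \<subseteq> \<Omega> - singular" "measure lborel (cbox c d) > 0"
      "\<And>p. p \<in> cbox c d \<Longrightarrow> excess_flux q / 2 \<le> excess_flux p"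
    by (rule continuous_pos_cbox_nbhd[OF open_nonsingular q(1) continuous_on_excess_flux]) blast
  define m where "m = measure lborel (cbox c d) * (excess_flux q / 2)"
  have "m > 0"
    using B(3) \<open>excess_flux q > 0\<close> by (simp add: m_def)
  have "m = integral (cbox c d) (\<lambda>_. excess_flux q / 2)"
    by (simp add: m_def)
  also have "\<dots> \<le> integral (cbox c d) excess_flux"
    using B(2,4) continuous_on_excess_flux
    by (intro integral_le integrable_continuous) (auto intro: continuous_on_subset)
  also have "\<dots> \<le> m / 2"
    using \<open>m > 0\<close> integral_excess_flux_cbox_le[OF div null B(2), of "m / 2"] by simp
  finally show False
    using \<open>m > 0\<close> by simp
qed

end

theorem theoremC:
  fixes \<Omega> :: "(real \<times> real) set" and u v :: "real \<times> real \<Rightarrow> real"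
  assumes "open \<Omega>" and "connected \<Omega>" and "bounded \<Omega>"
    and "C2_on \<Omega> u" and "C2_on \<Omega> v"
    and "continuous_on (closure \<Omega>) u" and "continuous_on (closure \<Omega>) v"
    and "\<forall>p \<in> \<Omega> - (Sing \<Omega> u \<union> Sing \<Omega> v). div2 (Nfield u) p \<ge> div2 (Nfield v) p"
    and "\<forall>p \<in> frontier \<Omega>. u p \<le> v p"
    and "hausdorff1 (closure (Sing \<Omega> u \<union> Sing \<Omega> v)) = 0"
  shows "\<forall>p \<in> \<Omega>. u p \<le> v p"
proof (rule ccontr)
  assume "\<not> (\<forall>p \<in> \<Omega>. u p \<le> v p)"
  then obtain p0 where p0: "p0 \<in> \<Omega>" "u p0 > v p0"
    by auto
  define \<epsilon> where "\<epsilon> = (u p0 - v p0) / 2"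
  interpret comparison_setting \<Omega> u v \<epsilon>
    using assms p0 by unfold_locales (auto simp: \<epsilon>_def)
  have "Vx u p * Vy v p - Vx v p * Vy u p = 0" if "p \<in> \<Omega>" "u p - v p > \<epsilon>" for p
  proof (cases "p \<in> singular")
    case True
    then show ?thesis
      by (auto simp: Sing_iff)
  next
    case False
    have "Nfield u p = Nfield v p"
      using Nfield_eq_where_excess[OF _ assms(10)] assms(8) False that by auto
    then show ?thesis
      using Nfield_eq_imp_parallel False that(1) by blast
  qed
  then have "u p0 - v p0 \<le> \<epsilon>"
    by (rule excess_le_if_parallel[OF _ p0(1)])
  then show False
    using p0(2) by (simp add: \<epsilon>_def)
qed

end
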